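(* Let $d$ be a positive integer, let $F$ be a Young diagram, and let $w\in\{+,-\}^k$ be the type sequence encoding the outer boundary of $F$. (a) For any $d$-RSK growth diagram on $F$, the sequence of partitions $\lambda^{(0)},\ldots,\lambda^{(k)}$ assigned to the lattice points on the outer boundary of $F$ (listed in order starting from the point on the positive $x$-axis) is a $d$-semistandard $w$-oscillating tableau, and the filling of the diagram avoids the pattern $d\cdots1(d+1)$. (b) Every filling of $F$ that avoids the pattern $d\cdots 1(d+1)$ extends uniquely to a $d$-RSK growth diagram on $F$ (i.e. there is a unique assignment of partitions to the lattice points of $F$ making it a $d$-RSK growth diagram with that filling). (c) Every $d$-semistandard $w$-oscillating tableau, assigned in order to the lattice points along the outer boundary of $F$ (starting from the point on the positive $x$-axis), extends uniquely to a $d$-RSK growth diagram on $F$ (i.e. there is a unique filling of $F$ and a unique assignment of partitions to the remaining lattice points making it a $d$-RSK growth diagram). Consequently, there is an explicit bijection between fillings of $F$ that avoid the pattern $d\cdots1(d+1)$ and $d$-semistandard $w$-oscillating tableaux.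
   Context: Partitions: finite weakly decreasing sequences of positive integers, with $\lambda_i=0$ for $i>\ell(\lambda)$; $|\lambda|=\sum\lambda_i$; a $d$-partition has $\ell(\lambda)\le d$. Interlacing: $\alpha\prec\beta$ (also written $\beta\succ\alpha$) means $\beta_1\ge\alpha_1\ge\beta_2\ge\alpha_2\ge\beta_3\ge\cdots$. Young diagrams are drawn in the first quadrant, made of unit cells with integer-lattice-point corners, left-justified with row 1 adjacent to the $x$-axis (English conventions reflected: rows stack upward). Its lattice points are the corners of its cells. A filling assigns a nonnegative integer entry to each cell. The outer boundary of a nonempty Young diagram is the lattice path from the positive $x$-axis to the positive $y$-axis consisting of unit steps up or left; its type sequence records `$+$' for each up step and `$-$' for each left step, in order. A filling contains the pattern $d\cdots1(d+1)$ if there are $d+1$ cells with nonzero entries $c_1,\dots,c_{d+1}$ such that each $c_{i+1}$ ($i<d$) lies strictly below and strictly to the right of $c_i$, and $c_{d+1}$ lies strictly above and strictly to the right of each of $c_1,\dots,c_d$; otherwise it avoids the pattern. A $d$-RSK growth diagram on $F$ consists of a filling of $F$ and an assignment of a partition to each lattice point of $F$, such that every lattice point on the coordinate axes is assigned $\emptyset$, and every cell satisfies the $d$-RSK local rule: if the cell has entry $m$ and its bottom-left, top-left, bottom-right, top-right corners are assigned $\kappa,\mu,\nu,\rho$, then all four are $d$-partitions, $\mu\succ\kappa\prec\nu$, $\mu\prec\rho\succ\nu$, $m=0$ or $\kappa_d=0$, and $\rho_1+\kappa_d=m+\min(\mu_d,\nu_d)+\max(\mu_1,\nu_1)$ and $\rho_i+\kappa_{i-1}=\min(\mu_{i-1},\nu_{i-1})+\max(\mu_i,\nu_i)$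 for $2\le i\le d$. For a type sequence $w=w_1\cdots w_r$, a semistandard $w$-oscillating tableau is a sequence of partitions $\emptyset=\lambda^{(0)},\lambda^{(1)},\ldots,\lambda^{(r)}=\emptyset$ with $\lambda^{(i-1)}\prec\lambda^{(i)}$ if $w_i=+$ and $\lambda^{(i-1)}\succ\lambda^{(i)}$ if $w_i=-$; it is $d$-semistandard if all $\lambda^{(i)}$ are $d$-partitions. *)

theory Defs
  imports Main
begin

text \<open>A partition is a finite weakly decreasing list of positive integers.
  part lam i is the 1-indexed part lam_i, which is 0 for i > length lam (and for i = 0).\<close>

definition is_partition :: "nat list \<Rightarrow> bool" where
  "is_partition xs \<longleftrightarrow> sorted_wrt (\<ge>) xs \<and> 0 \<notin> set xs"

definition part :: "nat list \<Rightarrow> nat \<Rightarrow> nat" where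
  "part lam i = (if 1 \<le> i \<and> i \<le> length lam then lam ! (i - 1) else 0)"

definition d_partition :: "nat \<Rightarrow> nat list \<Rightarrow> bool" where
  "d_partition d lam \<longleftrightarrow> is_partition lam \<and> length lam \<le> d"

text \<open>Interlacing: interlaces alpha beta means alpha \<prec> beta, i.e.
  beta_1 \<ge> alpha_1 \<ge> beta_2 \<ge> alpha_2 \<ge> ...\<close>
definition interlaces :: "nat list \<Rightarrow> nat list \<Rightarrow> bool" where
  "interlaces alpha beta \<longleftrightarrow>
     (\<forall>i\<ge>1. part alpha i \<le> part beta i \<and> part beta (Suc i) \<le> part alpha i)"

text \<open>A Young diagram F is given by the partition of its row lengths (row 1 first, adjacent
  to the x-axis). A cell is identified by its bottom-left corner (x,y); it lies in F iff
  y < length F and x < F ! y.\<close>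

definition cell :: "nat list \<Rightarrow> nat \<times> nat \<Rightarrow> bool" where
  "cell F c \<longleftrightarrow> snd c < length F \<and> fst c < F ! snd c"

definition lattice_point :: "nat list \<Rightarrow> nat \<times> nat \<Rightarrow> bool" where
  "lattice_point F p \<longleftrightarrow>
     (\<exists>x y. cell F (x, y) \<and> fst p \<in> {x, Suc x} \<and> snd p \<in> {y, Suc y})"

text \<open>Outer boundary: lattice path from (F_1, 0) to (0, length F) with unit up/left steps.
  From (x,y) one steps up iff the right edge of row y+1 lies at x.\<close>

definition step_up :: "nat list \<Rightarrow> nat \<times> nat \<Rightarrow> bool" where
  "step_up F p \<longleftrightarrow> snd p < length F \<and> F ! snd p = fst p"

definition bstep :: "nat list \<Rightarrow> nat \<times> nat \<Rightarrow> nat \<times> nat" where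
  "bstep F p = (if step_up F p then (fst p, Suc (snd p)) else (fst p - 1, snd p))"

fun bpt :: "nat list \<Rightarrow> nat \<Rightarrow> nat \<times> nat" where
  "bpt F 0 = (hd F, 0)"
| "bpt F (Suc i) = bstep F (bpt F i)"

definition boundary_len :: "nat list \<Rightarrow> nat" where
  "boundary_len F = hd F + length F"

text \<open>Type sequence of the outer boundary: True encodes '+' (up step), False '-' (left step).\<close>
definition type_seq :: "nat list \<Rightarrow> bool list" where
  "type_seq F = map (\<lambda>i. step_up F (bpt F i)) [0..<boundary_len F]"

definition contains_pattern :: "nat \<Rightarrow> nat list \<Rightarrow> (nat \<times> nat \<Rightarrow> nat) \<Rightarrow> bool" where
  "contains_pattern d F m \<longleftrightarrow>
     (\<exists>c :: nat \<Rightarrow> nat \<times> nat.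
        (\<forall>i\<in>{1..Suc d}. cell F (c i) \<and> m (c i) \<noteq> 0) \<and>
        (\<forall>i\<in>{1..<d}. fst (c i) < fst (c (Suc i)) \<and> snd (c (Suc i)) < snd (c i)) \<and>
        (\<forall>i\<in>{1..d}. fst (c i) < fst (c (Suc d)) \<and> snd (c i) < snd (c (Suc d))))"

definition avoids_pattern :: "nat \<Rightarrow> nat list \<Rightarrow> (nat \<times> nat \<Rightarrow> nat) \<Rightarrow> bool" where
  "avoids_pattern d F m \<longleftrightarrow> \<not> contains_pattern d F m"

definition rsk_local_rule :: "nat \<Rightarrow> nat \<Rightarrow> nat list \<Rightarrow> nat list \<Rightarrow> nat list \<Rightarrow> nat list \<Rightarrow> bool" where
  "rsk_local_rule d m kappa mu nu rho \<longleftrightarrow>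
     d_partition d kappa \<and> d_partition d mu \<and> d_partition d nu \<and> d_partition d rho \<and>
     interlaces kappa mu \<and> interlaces kappa nu \<and> interlaces mu rho \<and> interlaces nu rho \<and>
     (m = 0 \<or> part kappa d = 0) \<and>
     part rho 1 + part kappa d = m + min (part mu d) (part nu d) + max (part mu 1) (part nu 1) \<and>
     (\<forall>i\<in>{2..d}. part rho i + part kappa (i - 1) =
        min (part mu (i - 1)) (part nu (i - 1)) + max (part mu i) (part nu i))"

text \<open>m is the filling (only its values on cells of F matter), P assigns partitions to
  lattice points (only its values on lattice points of F matter).\<close>
definition growth_diagram ::
  "nat \<Rightarrow> nat list \<Rightarrow> (nat \<times> nat \<Rightarrow> nat) \<Rightarrow> (nat \<times> nat \<Rightarrow> nat list) \<Rightarrow> bool" where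
  "growth_diagram d F m P \<longleftrightarrow>
     (\<forall>p. lattice_point F p \<and> (fst p = 0 \<or> snd p = 0) \<longrightarrow> P p = []) \<and>
     (\<forall>x y. cell F (x, y) \<longrightarrow>
        rsk_local_rule d (m (x, y)) (P (x, y)) (P (x, Suc y)) (P (Suc x, y)) (P (Suc x, Suc y)))"

definition d_osc_tableau :: "nat \<Rightarrow> bool list \<Rightarrow> (nat \<Rightarrow> nat list) \<Rightarrow> bool" where
  "d_osc_tableau d w lam \<longleftrightarrow>
     lam 0 = [] \<and> lam (length w) = [] \<and>
     (\<forall>i\<le>length w. d_partition d (lam i)) \<and>
     (\<forall>i\<in>{1..length w}. if w ! (i - 1) then interlaces (lam (i - 1)) (lam i)
                                         else interlaces (lam i) (lam (i - 1)))"

end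

theory Submission
  imports Defs
begin

(* The local equations can be solved uniquely for the top-right corner \<rho> given (m, \<kappa>, \<mu>, \<nu>),
   and the whole local rule, side condition included, for (\<kappa>, m) given (\<mu>, \<nu>, \<rho>). Hence
   partitions grow uniquely from the axes and shrink uniquely from the outer boundary, and the
   boundary of a growth diagram is an oscillating tableau because the partitions interlace along
   every edge.

   Growing from the axes can only violate the side condition "m = 0 or \<kappa>_d = 0", and it does so
   exactly at the top-right cell of a pattern d...1(d+1), by a Greene-type property: \<kappa>_d > 0 at
   (x, y) iff the rectangle below-left of (x, y) contains a south-east chain of d nonzero cells.
   To see this, follow the cells where the i-th parts jump. The local equations turn a jump of the
   i-th parts at the south-west corner of a cell into a jump of the (i+1)-th parts at its
   north-east corner, and a nonzero entry or a south-west jump of the d-th parts into a north-east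
   jump of the first parts; and in any monotone grid a south-east chain of j+1 north-east jumps
   interleaves with a chain of j south-west jumps, and conversely. *)

section \<open>Partitions and interlacing\<close>

lemma part_0 [simp]: "part a 0 = 0"
  by (simp add: part_def)

lemma part_Nil [simp]: "part [] i = 0"
  by (simp add: part_def)

lemma part_beyond_length: "length a < i \<Longrightarrow> part a i = 0"
  by (simp add: part_def)

lemma d_partition_part_beyond: "d_partition d a \<Longrightarrow> d < i \<Longrightarrow> part a i = 0"
  by (simp add: d_partition_def part_def)

lemma d_partition_Nil [simp]: "d_partition d []"
  by (simp add: d_partition_def is_partition_def)

lemma part_pos:
  assumes "is_partition a" "1 \<le> i" "i \<le> length a"
  shows "0 < part a i"
proof -
  have "a ! (i - 1) \<in> set a" using assms(2,3) by simp
  then show ?thesis using assms unfolding is_partition_def part_def by (metis gr0I)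
qed

lemma d_partition_eqI:
  assumes a: "d_partition d a" and b: "d_partition d b"
    and parts: "\<And>i. 1 \<le> i \<Longrightarrow> i \<le> d \<Longrightarrow> part a i = part b i"
  shows "a = b"
proof -
  have partitions: "is_partition a" "is_partition b" and "length a \<le> d" "length b \<le> d"
    using a b by (auto simp: d_partition_def)
  have no_longer: "length a \<le> length b"
    if "is_partition a" "length a \<le> d" "\<And>i. 1 \<le> i \<Longrightarrow> i \<le> d \<Longrightarrow> part a i = part b i"
    for a b :: "nat list"
  proof (rule ccontr)
    assume "\<not> length a \<le> length b"
    then have "0 < part a (length a)" "part b (length a) = 0"
      using part_pos[OF that(1)] part_beyond_length[of b] by auto
    then show False using that(2) that(3)[of "length a"] by (cases "length a = 0") auto
  qed
  have "length a = length b"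
    using no_longer[of a b] no_longer[of b a] partitions \<open>length a \<le> d\<close> \<open>length b \<le> d\<close> parts
    by (metis le_antisym)
  moreover have "a ! i = b ! i" if "i < length a" for i
    using parts[of "Suc i"] that \<open>length a \<le> d\<close> \<open>length a = length b\<close> by (simp add: part_def)
  ultimately show ?thesis by (rule nth_equalityI)
qed

definition partition_of :: "nat \<Rightarrow> (nat \<Rightarrow> nat) \<Rightarrow> nat list" where
  "partition_of d f = takeWhile (\<lambda>v. 0 < v) (map f [1..<Suc d])"

context
  fixes d :: nat and f :: "nat \<Rightarrow> nat"
  assumes antitone: "\<And>i. 1 \<le> i \<Longrightarrow> i < d \<Longrightarrow> f (Suc i) \<le> f i"
begin

private lemma antitone_le: "i \<le> j \<Longrightarrow> 1 \<le> i \<Longrightarrow> j \<le> d \<Longrightarrow> f j \<le> f i"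
proof (induction j rule: dec_induct)
  case (step n)
  then show ?case using antitone[of n] by simp
qed simp

lemma d_partition_partition_of: "d_partition d (partition_of d f)"
proof -
  have "sorted_wrt (\<ge>) (map f [1..<Suc d])"
    unfolding sorted_wrt_map
    by (rule sorted_wrt_mono_rel[OF _ sorted_wrt_upt]) (auto intro!: antitone_le)
  then have "sorted_wrt (\<ge>) (partition_of d f)"
    unfolding partition_of_def by (rule sorted_wrt_takeWhile)
  moreover have "length (partition_of d f) \<le> d"
    using length_takeWhile_le[of _ "map f [1..<Suc d]"] by (simp add: partition_of_def del: upt_Suc)
  ultimately show ?thesis
    by (auto simp: d_partition_def is_partition_def partition_of_def dest: set_takeWhileD)
qed

lemma part_partition_of: "1 \<le> i \<Longrightarrow> i \<le> d \<Longrightarrow> part (partition_of d f) i = f i"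
proof -
  assume i: "1 \<le> i" "i \<le> d"
  let ?L = "map f [1..<Suc d]" and ?n = "length (partition_of d f)"
  show ?thesis
  proof (cases "i \<le> ?n")
    case True
    then show ?thesis
      using i by (simp add: part_def partition_of_def takeWhile_nth del: upt_Suc)
  next
    case False
    then have "?n < length ?L" using i by simp
    then have "f (Suc ?n) = 0"
      using nth_length_takeWhile[of "\<lambda>v. 0 < v" ?L] by (simp add: partition_of_def del: upt_Suc)
    moreover have "f i \<le> f (Suc ?n)" using False i by (intro antitone_le) auto
    ultimately show ?thesis using False by (simp add: part_def)
  qed
qed

end

lemma interlacesD1: "interlaces a b \<Longrightarrow> 1 \<le> i \<Longrightarrow> part a i \<le> part b i"
  by (simp add: interlaces_def)

lemma interlacesD2: "interlaces a b \<Longrightarrow> 1 \<le> i \<Longrightarrow> part b (Suc i) \<le> part a i"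
  by (simp add: interlaces_def)

lemma interlacesI:
  assumes a: "d_partition d a" and b: "d_partition d b"
    and le: "\<And>i. 1 \<le> i \<Longrightarrow> i \<le> d \<Longrightarrow> part a i \<le> part b i"
    and ge: "\<And>i. 1 \<le> i \<Longrightarrow> i < d \<Longrightarrow> part b (Suc i) \<le> part a i"
  shows "interlaces a b"
  unfolding interlaces_def
proof (intro allI impI conjI)
  fix i :: nat assume "1 \<le> i"
  then show "part a i \<le> part b i"
    using le d_partition_part_beyond[OF a, of i] by (cases "i \<le> d") auto
  show "part b (Suc i) \<le> part a i"
    using ge \<open>1 \<le> i\<close> d_partition_part_beyond[OF b, of "Suc i"] by (cases "i < d") auto
qed

lemma interlaces_Nil [simp]: "interlaces [] []"
  by (simp add: interlaces_def)

lemma interlaces_Nil_right: "interlaces a [] \<Longrightarrow> d_partition d a \<Longrightarrow> a = []"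
  by (rule d_partition_eqI[of d]) (auto dest: interlacesD1)

section \<open>The local rule\<close>

definition rsk_local_eqs :: "nat \<Rightarrow> nat \<Rightarrow> nat list \<Rightarrow> nat list \<Rightarrow> nat list \<Rightarrow> nat list \<Rightarrow> bool" where
  "rsk_local_eqs d m \<kappa> \<mu> \<nu> \<rho> \<longleftrightarrow>
     d_partition d \<kappa> \<and> d_partition d \<mu> \<and> d_partition d \<nu> \<and> d_partition d \<rho> \<and>
     interlaces \<kappa> \<mu> \<and> interlaces \<kappa> \<nu> \<and> interlaces \<mu> \<rho> \<and> interlaces \<nu> \<rho> \<and>
     part \<rho> 1 + part \<kappa> d = m + min (part \<mu> d) (part \<nu> d) + max (part \<mu> 1) (part \<nu> 1) \<and>
     (\<forall>i\<in>{2..d}. part \<rho> i + part \<kappa> (i - 1) =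
        min (part \<mu> (i - 1)) (part \<nu> (i - 1)) + max (part \<mu> i) (part \<nu> i))"

lemma rsk_local_rule_iff:
  "rsk_local_rule d m \<kappa> \<mu> \<nu> \<rho> \<longleftrightarrow> rsk_local_eqs d m \<kappa> \<mu> \<nu> \<rho> \<and> (m = 0 \<or> part \<kappa> d = 0)"
  unfolding rsk_local_rule_def rsk_local_eqs_def by auto

definition rsk_fwd :: "nat \<Rightarrow> nat \<Rightarrow> nat list \<Rightarrow> nat list \<Rightarrow> nat list \<Rightarrow> nat list" where
  "rsk_fwd d m \<kappa> \<mu> \<nu> = partition_of d (\<lambda>i.
     if i = 1 then m + min (part \<mu> d) (part \<nu> d) + max (part \<mu> 1) (part \<nu> 1) - part \<kappa> d
     else min (part \<mu> (i - 1)) (part \<nu> (i - 1)) + max (part \<mu> i) (part \<nu> i) - part \<kappa> (i - 1))"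

text \<open>The first local equation only determines m - \<kappa>_d; its positive and negative parts
  (truncated subtraction) give m and \<kappa>_d, which meets the side condition.\<close>

definition rsk_bwd :: "nat \<Rightarrow> nat list \<Rightarrow> nat list \<Rightarrow> nat list \<Rightarrow> nat list" where
  "rsk_bwd d \<mu> \<nu> \<rho> = partition_of d (\<lambda>i.
     if i < d then min (part \<mu> i) (part \<nu> i) + max (part \<mu> (Suc i)) (part \<nu> (Suc i)) - part \<rho> (Suc i)
     else min (part \<mu> d) (part \<nu> d) + max (part \<mu> 1) (part \<nu> 1) - part \<rho> 1)"

definition rsk_bwd_entry :: "nat \<Rightarrow> nat list \<Rightarrow> nat list \<Rightarrow> nat list \<Rightarrow> nat" where
  "rsk_bwd_entry d \<mu> \<nu> \<rho> = part \<rho> 1 - (min (part \<mu> d) (part \<nu> d) + max (part \<mu> 1) (part \<nu> 1))"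

lemma rsk_local_eqs_rsk_fwd:
  assumes d: "1 \<le> d" and \<kappa>: "d_partition d \<kappa>" and \<mu>: "d_partition d \<mu>" and \<nu>: "d_partition d \<nu>"
    and \<kappa>\<mu>: "interlaces \<kappa> \<mu>" and \<kappa>\<nu>: "interlaces \<kappa> \<nu>"
  shows "rsk_local_eqs d m \<kappa> \<mu> \<nu> (rsk_fwd d m \<kappa> \<mu> \<nu>)"
proof -
  define f where "f i = (if i = 1 then m + min (part \<mu> d) (part \<nu> d) + max (part \<mu> 1) (part \<nu> 1) - part \<kappa> d
     else min (part \<mu> (i - 1)) (part \<nu> (i - 1)) + max (part \<mu> i) (part \<nu> i) - part \<kappa> (i - 1))" for i
  let ?\<rho> = "rsk_fwd d m \<kappa> \<mu> \<nu>"
  have \<kappa>_le: "part \<kappa> i \<le> part \<mu> i" "part \<kappa> i \<le> part \<nu> i" if "1 \<le> i" for i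
    using interlacesD1[OF \<kappa>\<mu> that] interlacesD1[OF \<kappa>\<nu> that] by auto
  have \<kappa>_ge: "part \<mu> (Suc i) \<le> part \<kappa> i" "part \<nu> (Suc i) \<le> part \<kappa> i" if "1 \<le> i" for i
    using interlacesD2[OF \<kappa>\<mu> that] interlacesD2[OF \<kappa>\<nu> that] by auto
  have f_ge: "max (part \<mu> i) (part \<nu> i) \<le> f i" if "1 \<le> i" for i
  proof (cases "i = 1")
    case False
    then have "1 \<le> i - 1" using that by simp
    then show ?thesis using \<kappa>_le[OF \<open>1 \<le> i - 1\<close>] False by (auto simp: f_def min_def max_def)
  qed (use \<kappa>_le[OF d] in \<open>auto simp: f_def min_def max_def\<close>)
  have f_le: "f (Suc i) \<le> min (part \<mu> i) (part \<nu> i)" if "1 \<le> i" for i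
    using \<kappa>_ge[OF that] that by (auto simp: f_def min_def max_def)
  have "f (Suc i) \<le> f i" if "1 \<le> i" for i
    using f_le[OF that] f_ge[OF that] by simp
  then have \<rho>: "d_partition d ?\<rho>" and part_\<rho>: "\<And>i. 1 \<le> i \<Longrightarrow> i \<le> d \<Longrightarrow> part ?\<rho> i = f i"
    using d_partition_partition_of[of d f] part_partition_of[of d f]
    unfolding rsk_fwd_def f_def[abs_def] by auto
  have "interlaces \<mu> ?\<rho>" "interlaces \<nu> ?\<rho>"
    by (rule interlacesI[OF _ \<rho>]; use \<mu> \<nu> part_\<rho> f_ge f_le in fastforce)+
  moreover have "part ?\<rho> 1 + part \<kappa> d = m + min (part \<mu> d) (part \<nu> d) + max (part \<mu> 1) (part \<nu> 1)"
    using part_\<rho>[of 1] d \<kappa>_le[OF d] by (auto simp: f_def min_def max_def)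
  moreover have "part ?\<rho> i + part \<kappa> (i - 1) =
      min (part \<mu> (i - 1)) (part \<nu> (i - 1)) + max (part \<mu> i) (part \<nu> i)" if "i \<in> {2..d}" for i
  proof -
    have "1 \<le> i - 1" using that by auto
    then show ?thesis using part_\<rho>[of i] \<kappa>_le[OF \<open>1 \<le> i - 1\<close>] that by (auto simp: f_def min_def max_def)
  qed
  ultimately show ?thesis unfolding rsk_local_eqs_def using \<kappa> \<mu> \<nu> \<rho> \<kappa>\<mu> \<kappa>\<nu> by blast
qed

lemma rsk_local_rule_rsk_bwd:
  assumes d: "1 \<le> d" and \<mu>: "d_partition d \<mu>" and \<nu>: "d_partition d \<nu>" and \<rho>: "d_partition d \<rho>"
    and \<mu>\<rho>: "interlaces \<mu> \<rho>" and \<nu>\<rho>: "interlaces \<nu> \<rho>"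
  shows "rsk_local_rule d (rsk_bwd_entry d \<mu> \<nu> \<rho>) (rsk_bwd d \<mu> \<nu> \<rho>) \<mu> \<nu> \<rho>"
proof -
  define f where "f i = (if i < d then min (part \<mu> i) (part \<nu> i) + max (part \<mu> (Suc i)) (part \<nu> (Suc i)) - part \<rho> (Suc i)
     else min (part \<mu> d) (part \<nu> d) + max (part \<mu> 1) (part \<nu> 1) - part \<rho> 1)" for i
  let ?\<kappa> = "rsk_bwd d \<mu> \<nu> \<rho>"
  have \<rho>_ge: "part \<mu> i \<le> part \<rho> i" "part \<nu> i \<le> part \<rho> i" if "1 \<le> i" for i
    using interlacesD1[OF \<mu>\<rho> that] interlacesD1[OF \<nu>\<rho> that] by auto
  have \<rho>_le: "part \<rho> (Suc i) \<le> part \<mu> i" "part \<rho> (Suc i) \<le> part \<nu> i" if "1 \<le> i" for i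
    using interlacesD2[OF \<mu>\<rho> that] interlacesD2[OF \<nu>\<rho> that] by auto
  have f_ge: "max (part \<mu> (Suc i)) (part \<nu> (Suc i)) \<le> f i" if "1 \<le> i" "i < d" for i
    using that \<rho>_le[OF that(1)] by (auto simp: f_def min_def max_def)
  have f_le: "f i \<le> min (part \<mu> i) (part \<nu> i)" if "1 \<le> i" "i \<le> d" for i
    using that \<rho>_ge[of "Suc i"] \<rho>_ge[of 1] by (cases "i < d") (auto simp: f_def min_def max_def)
  have "f (Suc i) \<le> f i" if "1 \<le> i" "i < d" for i
    using f_le[of "Suc i"] f_ge[OF that] that by simp
  then have \<kappa>: "d_partition d ?\<kappa>" and part_\<kappa>: "\<And>i. 1 \<le> i \<Longrightarrow> i \<le> d \<Longrightarrow> part ?\<kappa> i = f i"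
    using d_partition_partition_of[of d f] part_partition_of[of d f]
    unfolding rsk_bwd_def f_def[abs_def] by auto
  have "interlaces ?\<kappa> \<mu>" "interlaces ?\<kappa> \<nu>"
    by (rule interlacesI[OF \<kappa>]; use \<mu> \<nu> part_\<kappa> f_ge f_le in fastforce)+
  moreover have "part \<rho> 1 + part ?\<kappa> d =
      rsk_bwd_entry d \<mu> \<nu> \<rho> + min (part \<mu> d) (part \<nu> d) + max (part \<mu> 1) (part \<nu> 1)"
    and "rsk_bwd_entry d \<mu> \<nu> \<rho> = 0 \<or> part ?\<kappa> d = 0"
    using part_\<kappa>[of d] d by (auto simp: f_def rsk_bwd_entry_def min_def max_def)
  moreover have "part \<rho> i + part ?\<kappa> (i - 1) =
      min (part \<mu> (i - 1)) (part \<nu> (i - 1)) + max (part \<mu> i) (part \<nu> i)" if "i \<in> {2..d}" for i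
  proof -
    have "1 \<le> i - 1" using that by auto
    then show ?thesis
      using part_\<kappa>[of "i - 1"] \<rho>_le[OF \<open>1 \<le> i - 1\<close>] \<rho>_ge[of i] that
      by (auto simp: f_def min_def max_def)
  qed
  ultimately show ?thesis unfolding rsk_local_rule_def using \<kappa> \<mu> \<nu> \<rho> \<mu>\<rho> \<nu>\<rho> by blast
qed

lemma rsk_local_eqs_imp_eq_rsk_fwd:
  assumes d: "1 \<le> d" and eqs: "rsk_local_eqs d m \<kappa> \<mu> \<nu> \<rho>"
  shows "\<rho> = rsk_fwd d m \<kappa> \<mu> \<nu>"
proof -
  have fwd: "rsk_local_eqs d m \<kappa> \<mu> \<nu> (rsk_fwd d m \<kappa> \<mu> \<nu>)"
    using eqs by (intro rsk_local_eqs_rsk_fwd[OF d]) (auto simp: rsk_local_eqs_def)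
  show ?thesis
  proof (rule d_partition_eqI[of d])
    fix i assume "1 \<le> i" "i \<le> d"
    then consider "i = 1" | "i \<in> {2..d}" by force
    then show "part \<rho> i = part (rsk_fwd d m \<kappa> \<mu> \<nu>) i"
    proof cases
      case 2
      then show ?thesis using eqs fwd unfolding rsk_local_eqs_def by (metis add_right_imp_eq)
    qed (use eqs fwd in \<open>simp add: rsk_local_eqs_def\<close>)
  qed (use eqs fwd in \<open>auto simp: rsk_local_eqs_def\<close>)
qed

lemma rsk_local_rule_imp_eq_rsk_bwd:
  assumes d: "1 \<le> d" and rule: "rsk_local_rule d m \<kappa> \<mu> \<nu> \<rho>"
  shows "\<kappa> = rsk_bwd d \<mu> \<nu> \<rho>" and "m = rsk_bwd_entry d \<mu> \<nu> \<rho>"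
proof -
  have bwd: "rsk_local_rule d (rsk_bwd_entry d \<mu> \<nu> \<rho>) (rsk_bwd d \<mu> \<nu> \<rho>) \<mu> \<nu> \<rho>"
    using rule by (intro rsk_local_rule_rsk_bwd[OF d]) (auto simp: rsk_local_rule_def)
  have last: "part \<kappa> d = part (rsk_bwd d \<mu> \<nu> \<rho>) d \<and> m = rsk_bwd_entry d \<mu> \<nu> \<rho>"
    using rule bwd unfolding rsk_local_rule_def by (auto simp: rsk_bwd_entry_def)
  then show "m = rsk_bwd_entry d \<mu> \<nu> \<rho>" by simp
  show "\<kappa> = rsk_bwd d \<mu> \<nu> \<rho>"
  proof (rule d_partition_eqI[of d])
    fix i assume "1 \<le> i" "i \<le> d"
    then consider "i = d" | "Suc i \<in> {2..d}" by force
    then show "part \<kappa> i = part (rsk_bwd d \<mu> \<nu> \<rho>) i"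
    proof cases
      case 2
      then show ?thesis
        using rule bwd unfolding rsk_local_rule_def by (metis diff_Suc_1 add_left_imp_eq)
    qed (use last in simp)
  qed (use rule bwd in \<open>auto simp: rsk_local_rule_def\<close>)
qed

section \<open>Jumps of monotone grid functions\<close>

definition monotone_grid :: "(nat \<times> nat \<Rightarrow> nat) \<Rightarrow> nat \<Rightarrow> nat \<Rightarrow> bool" where
  "monotone_grid V X Y \<longleftrightarrow>
     (\<forall>x y. x < X \<longrightarrow> y \<le> Y \<longrightarrow> V (x, y) \<le> V (Suc x, y)) \<and>
     (\<forall>x y. x \<le> X \<longrightarrow> y < Y \<longrightarrow> V (x, y) \<le> V (x, Suc y)) \<and>
     (\<forall>y\<le>Y. V (0, y) = 0) \<and> (\<forall>x\<le>X. V (x, 0) = 0)"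

fun ne_jump :: "(nat \<times> nat \<Rightarrow> nat) \<Rightarrow> nat \<times> nat \<Rightarrow> bool" where
  "ne_jump V (x, y) \<longleftrightarrow> max (V (x, Suc y)) (V (Suc x, y)) < V (Suc x, Suc y)"

fun sw_jump :: "(nat \<times> nat \<Rightarrow> nat) \<Rightarrow> nat \<times> nat \<Rightarrow> bool" where
  "sw_jump V (x, y) \<longleftrightarrow> V (x, y) < min (V (x, Suc y)) (V (Suc x, y))"

definition ne_jumps :: "(nat \<times> nat \<Rightarrow> nat) \<Rightarrow> nat \<Rightarrow> nat \<Rightarrow> (nat \<times> nat) set" where
  "ne_jumps V X Y = {p \<in> {..<X} \<times> {..<Y}. ne_jump V p}"

definition sw_jumps :: "(nat \<times> nat \<Rightarrow> nat) \<Rightarrow> nat \<Rightarrow> nat \<Rightarrow> (nat \<times> nat) set" where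
  "sw_jumps V X Y = {p \<in> {..<X} \<times> {..<Y}. sw_jump V p}"

definition strictly_se :: "nat \<times> nat \<Rightarrow> nat \<times> nat \<Rightarrow> bool" where
  "strictly_se p q \<longleftrightarrow> fst p < fst q \<and> snd q < snd p"

definition se_chain :: "(nat \<times> nat) set \<Rightarrow> nat \<Rightarrow> bool" where
  "se_chain S j \<longleftrightarrow> (\<exists>c. (\<forall>i<j. c i \<in> S) \<and> (\<forall>i. Suc i < j \<longrightarrow> strictly_se (c i) (c (Suc i))))"

lemma se_chain_mono: "se_chain S j \<Longrightarrow> S \<subseteq> T \<Longrightarrow> se_chain T j"
  unfolding se_chain_def by blast

lemma se_chain_one: "se_chain S (Suc 0) \<longleftrightarrow> S \<noteq> {}"
  unfolding se_chain_def by (auto intro: exI[of _ "\<lambda>_. _"])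

lemma monotone_grid_mono:
  assumes V: "monotone_grid V X Y" and "x \<le> x'" "x' \<le> X" "y \<le> y'" "y' \<le> Y"
  shows "V (x, y) \<le> V (x', y')"
proof -
  have "V (x, y) \<le> V (x', y)"
    using \<open>x \<le> x'\<close> \<open>x' \<le> X\<close>
    by (induction x' rule: dec_induct) (use V \<open>y' \<le> Y\<close> \<open>y \<le> y'\<close> in \<open>auto simp: monotone_grid_def intro: order_trans\<close>)
  also have "\<dots> \<le> V (x', y')"
    using \<open>y \<le> y'\<close> \<open>y' \<le> Y\<close>
    by (induction y' rule: dec_induct) (use V \<open>x' \<le> X\<close> in \<open>auto simp: monotone_grid_def intro: order_trans\<close>)
  finally show ?thesis .
qed

lemma monotone_grid_swap: "monotone_grid (V \<circ> prod.swap) Y X \<longleftrightarrow> monotone_grid V X Y"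
  unfolding monotone_grid_def by auto

lemma ne_jump_swap: "ne_jump (V \<circ> prod.swap) (y, x) \<longleftrightarrow> ne_jump V (x, y)"
  by (simp add: max.commute)

lemma sw_jump_swap: "sw_jump (V \<circ> prod.swap) (y, x) \<longleftrightarrow> sw_jump V (x, y)"
  by (simp add: min.commute)

lemma exists_increase:
  fixes f :: "nat \<Rightarrow> 'a :: linorder"
  shows "f 0 < f n \<Longrightarrow> \<exists>v<n. f v < f (Suc v)"
proof (induction n)
  case (Suc n)
  show ?case
  proof (cases "f 0 < f n")
    case True
    then show ?thesis using Suc.IH less_SucI by blast
  next
    case False
    then have "f n < f (Suc n)" using Suc.prems by simp
    then show ?thesis by blast
  qed
qed simp

lemma rise_up_persists_right:
  assumes V: "monotone_grid V X Y" and "y < Y" and "x0 \<le> x1" "x1 \<le> X"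
    and "V (x0, y) < V (x0, Suc y)" and "\<forall>x\<in>{x0..<x1}. \<not> sw_jump V (x, y)"
  shows "V (x1, y) < V (x1, Suc y)"
  using assms(3-6)
proof (induction x1 rule: dec_induct)
  case (step n)
  then have "V (n, y) < V (n, Suc y)" and "\<not> sw_jump V (n, y)" by auto
  moreover have "V (n, y) \<le> V (Suc n, y)" "V (n, Suc y) \<le> V (Suc n, Suc y)"
    using V step.prems \<open>y < Y\<close> by (auto simp: monotone_grid_def)
  ultimately show ?case by auto
qed

lemma rise_right_persists_up:
  assumes V: "monotone_grid V X Y" and "x < X" and "y0 \<le> y1" "y1 \<le> Y"
    and "V (x, y0) < V (Suc x, y0)" and "\<forall>y\<in>{y0..<y1}. \<not> sw_jump V (x, y)"
  shows "V (x, y1) < V (Suc x, y1)"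
  using rise_up_persists_right[of "V \<circ> prod.swap" Y X x y0 y1] assms
  by (simp add: monotone_grid_swap sw_jump_swap del: sw_jump.simps)

lemma rise_right_persists_down:
  assumes V: "monotone_grid V X Y" and "x < X" and "y0 \<le> y1" "y1 \<le> Y"
    and "V (x, y1) < V (Suc x, y1)" and "\<forall>y\<in>{y0..<y1}. \<not> ne_jump V (x, y)"
  shows "V (x, y0) < V (Suc x, y0)"
  using assms(3-6)
proof (induction y1 rule: dec_induct)
  case (step n)
  then have "V (x, Suc n) < V (Suc x, Suc n)" and "\<not> ne_jump V (x, n)" by auto
  moreover have "V (x, n) \<le> V (x, Suc n)" "V (Suc x, n) \<le> V (Suc x, Suc n)"
    using V step.prems \<open>x < X\<close> by (auto simp: monotone_grid_def)
  ultimately show ?case using step by auto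
qed simp

lemma rise_up_persists_left:
  assumes V: "monotone_grid V X Y" and "y < Y" and "x0 \<le> x1" "x1 \<le> X"
    and "V (x1, y) < V (x1, Suc y)" and "\<forall>x\<in>{x0..<x1}. \<not> ne_jump V (x, y)"
  shows "V (x0, y) < V (x0, Suc y)"
  using rise_right_persists_down[of "V \<circ> prod.swap" Y X y x0 x1] assms
  by (simp add: monotone_grid_swap ne_jump_swap del: ne_jump.simps)

lemma ne_jump_left_in_row:
  assumes V: "monotone_grid V X Y" and "y < Y" "x \<le> X" and "V (x, y) < V (x, Suc y)"
  shows "\<exists>u<x. ne_jump V (u, y)"
proof (rule ccontr)
  assume "\<not> ?thesis"
  then have "V (0, y) < V (0, Suc y)"
    using rise_up_persists_left[OF V \<open>y < Y\<close> _ \<open>x \<le> X\<close> assms(4), of 0] by auto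
  then show False using V \<open>y < Y\<close> by (simp add: monotone_grid_def)
qed

lemma ne_jump_below_in_column:
  assumes V: "monotone_grid V X Y" and "x < X" "y \<le> Y" and "V (x, y) < V (Suc x, y)"
  shows "\<exists>v<y. ne_jump V (x, v)"
proof (rule ccontr)
  assume "\<not> ?thesis"
  then have "V (x, 0) < V (Suc x, 0)"
    using rise_right_persists_down[OF V \<open>x < X\<close> _ \<open>y \<le> Y\<close> assms(4), of 0] by auto
  then show False using V \<open>x < X\<close> by (simp add: monotone_grid_def)
qed

lemma monotone_grid_pos_iff_ne_jump:
  assumes V: "monotone_grid V X Y"
  shows "0 < V (X, Y) \<longleftrightarrow> ne_jumps V X Y \<noteq> {}"
proof
  assume "0 < V (X, Y)"
  moreover have "V (X, 0) = 0" using V by (simp add: monotone_grid_def)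
  ultimately obtain v where "v < Y" "V (X, v) < V (X, Suc v)"
    using exists_increase[of "\<lambda>v. V (X, v)" Y] by auto
  then show "ne_jumps V X Y \<noteq> {}"
    using ne_jump_left_in_row[OF V] by (fastforce simp: ne_jumps_def)
next
  assume "ne_jumps V X Y \<noteq> {}"
  then obtain x y where "x < X" "y < Y" "ne_jump V (x, y)" by (auto simp: ne_jumps_def)
  then have "0 < V (Suc x, Suc y)" by simp
  also have "\<dots> \<le> V (X, Y)" using monotone_grid_mono[OF V] \<open>x < X\<close> \<open>y < Y\<close> by simp
  finally show "0 < V (X, Y)" .
qed

definition se_between :: "nat \<times> nat \<Rightarrow> nat \<times> nat \<Rightarrow> nat \<times> nat \<Rightarrow> bool" where
  "se_between n s n' \<longleftrightarrow> fst n < fst s \<and> fst s \<le> fst n' \<and> snd n' < snd s \<and> snd s \<le> snd n"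

lemma se_between_imp_strictly_se:
  assumes "\<forall>i<j. se_between (n i) (s i) (n (Suc i))"
  shows "Suc i < Suc j \<Longrightarrow> strictly_se (n i) (n (Suc i))"
    and "Suc i < j \<Longrightarrow> strictly_se (s i) (s (Suc i))"
  using assms[rule_format, of i] assms[rule_format, of "Suc i"]
  by (auto simp: se_between_def strictly_se_def)

lemma sw_jump_between_ne_jumps:
  assumes V: "monotone_grid V X Y" and n: "ne_jump V (xa, ya)" and n': "ne_jump V (xb, yb)"
    and "xa < xb" "yb < ya" "xb < X" "ya < Y"
  shows "\<exists>s. sw_jump V s \<and> se_between (xa, ya) s (xb, yb)"
proof (rule ccontr)
  assume none: "\<not> ?thesis"
  have "V (xb, ya) < V (xb, Suc ya)"
  proof (rule rise_up_persists_right[OF V \<open>ya < Y\<close>, of "Suc xa"])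
    show "V (Suc xa, ya) < V (Suc xa, Suc ya)" using n by simp
    show "\<forall>x\<in>{Suc xa..<xb}. \<not> sw_jump V (x, ya)"
    proof (intro ballI notI)
      fix x assume "x \<in> {Suc xa..<xb}" "sw_jump V (x, ya)"
      moreover have "se_between (xa, ya) (x, ya) (xb, yb)"
        using \<open>x \<in> {Suc xa..<xb}\<close> \<open>yb < ya\<close> by (simp add: se_between_def)
      ultimately show False using none by blast
    qed
  qed (use \<open>xa < xb\<close> \<open>xb < X\<close> in auto)
  moreover have "V (xb, ya) < V (Suc xb, ya)"
  proof (rule rise_right_persists_up[OF V \<open>xb < X\<close>, of "Suc yb"])
    show "V (xb, Suc yb) < V (Suc xb, Suc yb)" using n' by simp
    show "\<forall>y\<in>{Suc yb..<ya}. \<not> sw_jump V (xb, y)"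
    proof (intro ballI notI)
      fix y assume "y \<in> {Suc yb..<ya}" "sw_jump V (xb, y)"
      moreover have "se_between (xa, ya) (xb, y) (xb, yb)"
        using \<open>y \<in> {Suc yb..<ya}\<close> \<open>xa < xb\<close> by (simp add: se_between_def)
      ultimately show False using none by blast
    qed
  qed (use \<open>yb < ya\<close> \<open>ya < Y\<close> in auto)
  ultimately have "sw_jump V (xb, ya)" by simp
  then show False
    using none \<open>xa < xb\<close> \<open>yb < ya\<close> by (auto simp: se_between_def simp del: sw_jump.simps)
qed

lemma ne_jump_between_sw_jumps:
  assumes V: "monotone_grid V X Y" and s: "sw_jump V (x, y)" and s': "sw_jump V (x', y')"
    and "x < x'" "y' < y" "x' < X" "y < Y"
  shows "\<exists>n. ne_jump V n \<and> x \<le> fst n \<and> fst n < x' \<and> y' \<le> snd n \<and> snd n < y"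
proof (rule ccontr)
  assume none: "\<not> ?thesis"
  have "V (x, Suc y') < V (Suc x, Suc y')"
  proof (rule rise_right_persists_down[OF V, of x "Suc y'" y])
    show "V (x, y) < V (Suc x, y)" using s by simp
    show "\<forall>v\<in>{Suc y'..<y}. \<not> ne_jump V (x, v)"
      using none \<open>x < x'\<close> by (auto simp del: ne_jump.simps)
  qed (use \<open>x < x'\<close> \<open>x' < X\<close> \<open>y' < y\<close> \<open>y < Y\<close> in auto)
  moreover have "V (Suc x, y') < V (Suc x, Suc y')"
  proof (rule rise_up_persists_left[OF V, of y' "Suc x" x'])
    show "V (x', y') < V (x', Suc y')" using s' by simp
    show "\<forall>u\<in>{Suc x..<x'}. \<not> ne_jump V (u, y')"
      using none \<open>y' < y\<close> by (auto simp del: ne_jump.simps)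
  qed (use \<open>x < x'\<close> \<open>x' < X\<close> \<open>y' < y\<close> \<open>y < Y\<close> in auto)
  ultimately have "ne_jump V (x, y')" by simp
  then show False using none \<open>x < x'\<close> \<open>y' < y\<close> by (auto simp del: ne_jump.simps)
qed

lemma se_chain_sw_jumps_of_ne_jumps:
  assumes V: "monotone_grid V X Y" and chain: "se_chain (ne_jumps V X Y) (Suc j)"
  shows "se_chain (sw_jumps V X Y) j"
proof -
  obtain n where n: "\<forall>i<Suc j. n i \<in> ne_jumps V X Y"
    and se: "\<forall>i. Suc i < Suc j \<longrightarrow> strictly_se (n i) (n (Suc i))"
    using chain unfolding se_chain_def by blast
  have "\<forall>i\<in>{..<j}. \<exists>s. sw_jump V s \<and> se_between (n i) s (n (Suc i))"
  proof
    fix i assume "i \<in> {..<j}"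
    then have "n i \<in> ne_jumps V X Y" "n (Suc i) \<in> ne_jumps V X Y" "strictly_se (n i) (n (Suc i))"
      using n se by auto
    moreover obtain xa ya xb yb where "n i = (xa, ya)" "n (Suc i) = (xb, yb)" by fastforce
    ultimately show "\<exists>s. sw_jump V s \<and> se_between (n i) s (n (Suc i))"
      using sw_jump_between_ne_jumps[OF V, of xa ya xb yb]
      by (auto simp: ne_jumps_def strictly_se_def simp del: ne_jump.simps sw_jump.simps)
  qed
  from bchoice[OF this] obtain s where s: "\<forall>i<j. sw_jump V (s i) \<and> se_between (n i) (s i) (n (Suc i))"
    by auto
  have "s i \<in> sw_jumps V X Y" if "i < j" for i
  proof -
    have "n i \<in> {..<X} \<times> {..<Y}" "n (Suc i) \<in> {..<X} \<times> {..<Y}"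
      using n that by (auto simp: ne_jumps_def)
    moreover have "sw_jump V (s i)" "se_between (n i) (s i) (n (Suc i))" using s that by auto
    ultimately show ?thesis by (auto simp: sw_jumps_def se_between_def mem_Times_iff simp del: sw_jump.simps)
  qed
  then show ?thesis
    unfolding se_chain_def using s se_between_imp_strictly_se(2)[of j n s] by blast
qed

lemma ne_jump_around_sw_chain:
  assumes V: "monotone_grid V X Y" and s: "\<forall>i<j. s i \<in> sw_jumps V X Y"
    and se: "\<forall>i. Suc i < j \<longrightarrow> strictly_se (s i) (s (Suc i))" and "i \<le> j" "1 \<le> j"
  shows "\<exists>n. n \<in> ne_jumps V X Y \<and>
    (0 < i \<longrightarrow> fst (s (i - 1)) \<le> fst n \<and> snd n < snd (s (i - 1))) \<and>
    (i < j \<longrightarrow> fst n < fst (s i) \<and> snd (s i) \<le> snd n)"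
proof -
  consider "i = 0" | "0 < i" "i < j" | "i = j" "0 < i" using \<open>i \<le> j\<close> \<open>1 \<le> j\<close> by fastforce
  then show ?thesis
  proof cases
    case 1
    obtain x y where xy: "s 0 = (x, y)" by fastforce
    then have "sw_jump V (x, y)" "x < X" "y < Y" using s \<open>1 \<le> j\<close> by (auto simp: sw_jumps_def)
    then obtain u where "u < x" "ne_jump V (u, y)" using ne_jump_left_in_row[OF V, of y x] by auto
    then show ?thesis
      using 1 xy \<open>x < X\<close> \<open>y < Y\<close> by (intro exI[of _ "(u, y)"]) (auto simp: ne_jumps_def)
  next
    case 2
    have "s (i - 1) \<in> sw_jumps V X Y" "s i \<in> sw_jumps V X Y" "strictly_se (s (i - 1)) (s i)"
      using s se[rule_format, of "i - 1"] 2 by auto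
    moreover obtain x y x' y' where xy: "s (i - 1) = (x, y)" "s i = (x', y')" by fastforce
    ultimately have "sw_jump V (x, y)" "sw_jump V (x', y')" "x < x'" "y' < y" "x' < X" "y < Y"
      by (auto simp: sw_jumps_def strictly_se_def simp del: sw_jump.simps)
    then obtain n where "ne_jump V n" "x \<le> fst n" "fst n < x'" "y' \<le> snd n" "snd n < y"
      using ne_jump_between_sw_jumps[OF V] by blast
    then show ?thesis
      using 2 xy \<open>x' < X\<close> \<open>y < Y\<close> by (intro exI[of _ n]) (auto simp: ne_jumps_def mem_Times_iff)
  next
    case 3
    have "s (j - 1) \<in> sw_jumps V X Y" using s \<open>1 \<le> j\<close> by simp
    moreover obtain x y where xy: "s (j - 1) = (x, y)" by fastforce
    ultimately have "sw_jump V (x, y)" "x < X" "y < Y" by (auto simp: sw_jumps_def simp del: sw_jump.simps)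
    then obtain v where "v < y" "ne_jump V (x, v)" using ne_jump_below_in_column[OF V, of x y] by auto
    then show ?thesis
      using 3 xy \<open>x < X\<close> \<open>y < Y\<close> by (intro exI[of _ "(x, v)"]) (auto simp: ne_jumps_def)
  qed
qed

lemma se_chain_ne_jumps_of_sw_jumps:
  assumes V: "monotone_grid V X Y" and "1 \<le> j" and chain: "se_chain (sw_jumps V X Y) j"
  shows "se_chain (ne_jumps V X Y) (Suc j)"
proof -
  obtain s where s: "\<forall>i<j. s i \<in> sw_jumps V X Y"
    and se: "\<forall>i. Suc i < j \<longrightarrow> strictly_se (s i) (s (Suc i))"
    using chain unfolding se_chain_def by blast
  have "\<forall>i\<in>{..j}. \<exists>n. n \<in> ne_jumps V X Y \<and>
      (0 < i \<longrightarrow> fst (s (i - 1)) \<le> fst n \<and> snd n < snd (s (i - 1))) \<and>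
      (i < j \<longrightarrow> fst n < fst (s i) \<and> snd (s i) \<le> snd n)"
    using ne_jump_around_sw_chain[OF V s se _ \<open>1 \<le> j\<close>] by simp
  from bchoice[OF this] obtain n where n: "\<forall>i\<in>{..j}. n i \<in> ne_jumps V X Y \<and>
      (0 < i \<longrightarrow> fst (s (i - 1)) \<le> fst (n i) \<and> snd (n i) < snd (s (i - 1))) \<and>
      (i < j \<longrightarrow> fst (n i) < fst (s i) \<and> snd (s i) \<le> snd (n i))"
    by auto
  have "\<forall>i<j. se_between (n i) (s i) (n (Suc i))"
    using n by (fastforce simp: se_between_def)
  then show ?thesis
    unfolding se_chain_def using n se_between_imp_strictly_se(1)[of j n s] by (meson atMost_iff less_Suc_eq_le)
qed

section \<open>Growth on a rectangle\<close>

definition rsk_rect :: "nat \<Rightarrow> (nat \<times> nat \<Rightarrow> nat) \<Rightarrow> (nat \<times> nat \<Rightarrow> nat list) \<Rightarrow> nat \<Rightarrow> nat \<Rightarrow> bool" where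
  "rsk_rect d m P X Y \<longleftrightarrow>
     (\<forall>x<X. \<forall>y<Y. rsk_local_eqs d (m (x, y)) (P (x, y)) (P (x, Suc y)) (P (Suc x, y)) (P (Suc x, Suc y))) \<and>
     (\<forall>x\<le>X. P (x, 0) = []) \<and> (\<forall>y\<le>Y. P (0, y) = [])"

definition part_grid :: "(nat \<times> nat \<Rightarrow> nat list) \<Rightarrow> nat \<Rightarrow> nat \<times> nat \<Rightarrow> nat" where
  "part_grid P i p = part (P p) i"

lemma rsk_rect_subrect: "rsk_rect d m P X Y \<Longrightarrow> X' \<le> X \<Longrightarrow> Y' \<le> Y \<Longrightarrow> rsk_rect d m P X' Y'"
  unfolding rsk_rect_def by auto

lemma rsk_rect_cell:
  "rsk_rect d m P X Y \<Longrightarrow> x < X \<Longrightarrow> y < Y \<Longrightarrow>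
    rsk_local_eqs d (m (x, y)) (P (x, y)) (P (x, Suc y)) (P (Suc x, y)) (P (Suc x, Suc y))"
  by (simp add: rsk_rect_def)

lemma rsk_rect_interlaces:
  assumes P: "rsk_rect d m P X Y"
  shows "x < X \<Longrightarrow> y \<le> Y \<Longrightarrow> interlaces (P (x, y)) (P (Suc x, y))"
    and "x \<le> X \<Longrightarrow> y < Y \<Longrightarrow> interlaces (P (x, y)) (P (x, Suc y))"
proof -
  note eqs = rsk_rect_cell[OF P]
  show "interlaces (P (x, y)) (P (Suc x, y))" if "x < X" "y \<le> Y"
  proof (cases y)
    case 0
    then show ?thesis using P that by (simp add: rsk_rect_def)
  next
    case (Suc y')
    then show ?thesis
      using eqs[of x y] eqs[of x y'] that by (cases "y < Y") (auto simp: rsk_local_eqs_def)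
  qed
  show "interlaces (P (x, y)) (P (x, Suc y))" if "x \<le> X" "y < Y"
  proof (cases x)
    case 0
    then show ?thesis using P that by (simp add: rsk_rect_def)
  next
    case (Suc x')
    then show ?thesis
      using eqs[of x y] eqs[of x' y] that by (cases "x < X") (auto simp: rsk_local_eqs_def)
  qed
qed

lemma rsk_rect_monotone_grid:
  assumes P: "rsk_rect d m P X Y" and "1 \<le> i"
  shows "monotone_grid (part_grid P i) X Y"
  using rsk_rect_interlaces[OF P] P interlacesD1[OF _ \<open>1 \<le> i\<close>]
  by (auto simp: monotone_grid_def part_grid_def rsk_rect_def)

lemma rsk_local_eqs_jump_Suc_iff:
  assumes "rsk_local_eqs d m \<kappa> \<mu> \<nu> \<rho>" and "1 \<le> i" "i < d"
  shows "max (part \<mu> (Suc i)) (part \<nu> (Suc i)) < part \<rho> (Suc i) \<longleftrightarrow>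
    part \<kappa> i < min (part \<mu> i) (part \<nu> i)"
proof -
  have "Suc i \<in> {2..d}" using assms(2,3) by simp
  then have "part \<rho> (Suc i) + part \<kappa> i =
      min (part \<mu> i) (part \<nu> i) + max (part \<mu> (Suc i)) (part \<nu> (Suc i))"
    using assms(1) unfolding rsk_local_eqs_def by (metis diff_Suc_1)
  then show ?thesis by linarith
qed

lemma rsk_local_eqs_jump_1_iff:
  assumes "rsk_local_eqs d m \<kappa> \<mu> \<nu> \<rho>" and "1 \<le> d"
  shows "max (part \<mu> 1) (part \<nu> 1) < part \<rho> 1 \<longleftrightarrow>
    0 < m \<or> part \<kappa> d < min (part \<mu> d) (part \<nu> d)"
proof -
  have "part \<kappa> d \<le> part \<mu> d" "part \<kappa> d \<le> part \<nu> d"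
    using assms interlacesD1 unfolding rsk_local_eqs_def by blast+
  then show ?thesis using assms(1) unfolding rsk_local_eqs_def by linarith
qed

lemma rsk_rect_ne_jumps_Suc:
  assumes P: "rsk_rect d m P X Y" and "1 \<le> i" "i < d"
  shows "ne_jumps (part_grid P (Suc i)) X Y = sw_jumps (part_grid P i) X Y"
proof -
  have "ne_jump (part_grid P (Suc i)) (x, y) \<longleftrightarrow> sw_jump (part_grid P i) (x, y)" if "x < X" "y < Y" for x y
    using rsk_local_eqs_jump_Suc_iff[OF rsk_rect_cell[OF P that] assms(2,3)] by (simp add: part_grid_def)
  then show ?thesis unfolding ne_jumps_def sw_jumps_def by auto
qed

lemma rsk_rect_ne_jumps_1:
  assumes P: "rsk_rect d m P X Y" and "1 \<le> d"
  shows "ne_jumps (part_grid P 1) X Y = {p \<in> {..<X} \<times> {..<Y}. 0 < m p} \<union> sw_jumps (part_grid P d) X Y"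
proof -
  have "ne_jump (part_grid P 1) (x, y) \<longleftrightarrow> 0 < m (x, y) \<or> sw_jump (part_grid P d) (x, y)"
    if "x < X" "y < Y" for x y
    using rsk_local_eqs_jump_1_iff[OF rsk_rect_cell[OF P that] assms(2)] by (simp add: part_grid_def)
  then show ?thesis unfolding ne_jumps_def sw_jumps_def by auto
qed

lemma rsk_rect_se_chain_later_part:
  assumes P: "rsk_rect d m P X Y" and "1 \<le> i" "i + k \<le> d"
  shows "se_chain (ne_jumps (part_grid P i) X Y) (j + k) \<Longrightarrow>
    se_chain (ne_jumps (part_grid P (i + k)) X Y) j"
  using \<open>i + k \<le> d\<close>
proof (induction k arbitrary: j)
  case (Suc k)
  then have "se_chain (ne_jumps (part_grid P (i + k)) X Y) (Suc j)" by simp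
  then show ?case
    using se_chain_sw_jumps_of_ne_jumps[OF rsk_rect_monotone_grid[OF P]]
      rsk_rect_ne_jumps_Suc[OF P, of "i + k"] \<open>1 \<le> i\<close> Suc.prems(2) by simp
qed simp

lemma rsk_rect_se_chain_earlier_part:
  assumes P: "rsk_rect d m P X Y" and "1 \<le> i" "i + k \<le> d" "1 \<le> j"
  shows "se_chain (ne_jumps (part_grid P (i + k)) X Y) j \<Longrightarrow>
    se_chain (ne_jumps (part_grid P i) X Y) (j + k)"
  using assms(2,3)
proof (induction k arbitrary: i)
  case (Suc k)
  then have "se_chain (ne_jumps (part_grid P (Suc i)) X Y) (j + k)" by simp
  then show ?case
    using se_chain_ne_jumps_of_sw_jumps[OF rsk_rect_monotone_grid[OF P \<open>1 \<le> i\<close>], of "j + k"]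
      rsk_rect_ne_jumps_Suc[OF P \<open>1 \<le> i\<close>] Suc.prems \<open>1 \<le> j\<close> by simp
qed simp

lemma rsk_rect_last_part_pos_if_se_chain:
  assumes d: "1 \<le> d" and P: "rsk_rect d m P X Y"
    and chain: "se_chain {p \<in> {..<X} \<times> {..<Y}. 0 < m p} d"
  shows "0 < part (P (X, Y)) d"
proof -
  have "se_chain (ne_jumps (part_grid P 1) X Y) (1 + (d - 1))"
    using se_chain_mono[OF chain] rsk_rect_ne_jumps_1[OF P d] d by auto
  then have "se_chain (ne_jumps (part_grid P d) X Y) 1"
    using rsk_rect_se_chain_later_part[OF P, of 1 "d - 1" 1] d by simp
  then show ?thesis
    using monotone_grid_pos_iff_ne_jump[OF rsk_rect_monotone_grid[OF P d]]
    by (simp add: se_chain_one part_grid_def)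
qed

lemma rsk_rect_se_chain_if_last_part_pos:
  assumes d: "1 \<le> d"
  shows "rsk_rect d m P X Y \<Longrightarrow> 0 < part (P (X, Y)) d \<Longrightarrow>
    se_chain {p \<in> {..<X} \<times> {..<Y}. 0 < m p} d"
proof (induction "X + Y" arbitrary: X Y rule: less_induct)
  case less
  note P = less.prems(1)
  have "se_chain (ne_jumps (part_grid P d) X Y) 1"
    using less.prems(2) monotone_grid_pos_iff_ne_jump[OF rsk_rect_monotone_grid[OF P d]]
    by (simp add: se_chain_one part_grid_def)
  then have "se_chain (ne_jumps (part_grid P 1) X Y) d"
    using rsk_rect_se_chain_earlier_part[OF P, of 1 "d - 1" 1] d by simp
  then obtain c where c: "\<forall>i<d. c i \<in> ne_jumps (part_grid P 1) X Y"
    and se: "\<forall>i. Suc i < d \<longrightarrow> strictly_se (c i) (c (Suc i))"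
    unfolding se_chain_def by blast
  show ?case
  proof (cases "\<forall>i<d. 0 < m (c i)")
    case True
    then show ?thesis
      using c se unfolding se_chain_def by (intro exI[of _ c]) (auto simp: ne_jumps_def)
  next
    case False
    then obtain i x y where "i < d" "c i = (x, y)" "m (x, y) = 0" by (metis gr0I surj_pair)
    then have "(x, y) \<in> sw_jumps (part_grid P d) X Y"
      using c rsk_rect_ne_jumps_1[OF P d] by fastforce
    then have "x < X" "y < Y" "0 < part (P (x, Suc y)) d" by (auto simp: sw_jumps_def part_grid_def)
    moreover have "rsk_rect d m P x (Suc y)" using rsk_rect_subrect[OF P] \<open>x < X\<close> \<open>y < Y\<close> by simp
    ultimately have "se_chain {p \<in> {..<x} \<times> {..<Suc y}. 0 < m p} d"
      using less.hyps[of x "Suc y"] by simp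
    then show ?thesis by (rule se_chain_mono) (use \<open>x < X\<close> \<open>y < Y\<close> in auto)
  qed
qed

theorem rsk_rect_last_part_pos_iff_se_chain:
  assumes "1 \<le> d" "rsk_rect d m P X Y"
  shows "0 < part (P (X, Y)) d \<longleftrightarrow> se_chain {p \<in> {..<X} \<times> {..<Y}. 0 < m p} d"
  using rsk_rect_last_part_pos_if_se_chain[OF assms] rsk_rect_se_chain_if_last_part_pos[OF assms]
  by blast

section \<open>The Young diagram and its outer boundary\<close>

lemma partition_nth_antimono: "is_partition F \<Longrightarrow> i \<le> j \<Longrightarrow> j < length F \<Longrightarrow> F ! j \<le> F ! i"
  unfolding is_partition_def using sorted_wrt_nth_less[of "(\<ge>)" F i j] by (cases "i = j") auto

lemma partition_nth_pos: "is_partition F \<Longrightarrow> i < length F \<Longrightarrow> 0 < F ! i"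
  unfolding is_partition_def using nth_mem[of i F] by (metis gr0I)

lemma cell_downward_closed: "is_partition F \<Longrightarrow> cell F (x, y) \<Longrightarrow> x' \<le> x \<Longrightarrow> y' \<le> y \<Longrightarrow> cell F (x', y')"
  unfolding cell_def using partition_nth_antimono[of F y' y] by fastforce

lemma cell_bounds: "is_partition F \<Longrightarrow> F \<noteq> [] \<Longrightarrow> cell F (x, y) \<Longrightarrow> x < hd F \<and> y < length F"
  unfolding cell_def using partition_nth_antimono[of F 0 y] by (auto simp: hd_conv_nth)

lemma lattice_point_cell_corners:
  "cell F (x, y) \<Longrightarrow> lattice_point F (x, y) \<and> lattice_point F (Suc x, y) \<and>
    lattice_point F (x, Suc y) \<and> lattice_point F (Suc x, Suc y)"
  unfolding lattice_point_def by auto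

lemma lattice_point_Suc_Suc_cell:
  assumes F: "is_partition F" and "lattice_point F (Suc x, Suc y)"
  shows "cell F (x, y)"
proof -
  obtain a b where "cell F (a, b)" "Suc x \<in> {a, Suc a}" "Suc y \<in> {b, Suc b}"
    using assms(2) unfolding lattice_point_def by auto
  then show ?thesis using cell_downward_closed[OF F, of a b x y] by auto
qed

lemma lattice_point_Suc_cell_right:
  assumes F: "is_partition F" and "lattice_point F (Suc x, y)"
  shows "cell F (x, y) \<or> (0 < y \<and> cell F (x, y - 1))"
proof -
  obtain a b where ab: "cell F (a, b)" "Suc x \<in> {a, Suc a}" "y \<in> {b, Suc b}"
    using assms(2) unfolding lattice_point_def by auto
  then have "cell F (x, b)" using cell_downward_closed[OF F ab(1), of x b] by auto
  then show ?thesis using ab(3) by auto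
qed

lemma lattice_point_Suc_cell_up:
  assumes F: "is_partition F" and "lattice_point F (x, Suc y)"
  shows "cell F (x, y) \<or> (0 < x \<and> cell F (x - 1, y))"
proof -
  obtain a b where ab: "cell F (a, b)" "x \<in> {a, Suc a}" "Suc y \<in> {b, Suc b}"
    using assms(2) unfolding lattice_point_def by auto
  then have "cell F (a, y)" using cell_downward_closed[OF F ab(1), of a y] by auto
  then show ?thesis using ab(2) by auto
qed

definition on_boundary :: "nat list \<Rightarrow> nat \<times> nat \<Rightarrow> bool" where
  "on_boundary F p \<longleftrightarrow> snd p \<le> length F \<and> fst p \<le> hd F \<and>
     (snd p < length F \<longrightarrow> F ! snd p \<le> fst p) \<and> (0 < snd p \<longrightarrow> fst p \<le> F ! (snd p - 1))"

lemma on_boundary_iff: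
  assumes F: "is_partition F" "F \<noteq> []"
  shows "on_boundary F (x, y) \<longleftrightarrow> lattice_point F (x, y) \<and> \<not> cell F (x, y)"
proof
  assume B: "on_boundary F (x, y)"
  have "0 < F ! 0" "y \<noteq> 0 \<Longrightarrow> 0 < F ! (y - 1)"
    using partition_nth_pos[OF F(1)] B F(2) by (auto simp: on_boundary_def)
  then have "cell F (x - 1, y - 1)"
    using B F(2) by (cases x; cases y) (auto simp: on_boundary_def cell_def hd_conv_nth)
  then have "lattice_point F (x, y)"
    unfolding lattice_point_def by (intro exI[of _ "x - 1"] exI[of _ "y - 1"]) auto
  moreover have "\<not> cell F (x, y)" using B by (auto simp: on_boundary_def cell_def)
  ultimately show "lattice_point F (x, y) \<and> \<not> cell F (x, y)" ..
next
  assume L: "lattice_point F (x, y) \<and> \<not> cell F (x, y)"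
  then obtain a b where ab: "cell F (a, b)" "x \<in> {a, Suc a}" "y \<in> {b, Suc b}"
    unfolding lattice_point_def by auto
  then have "b < length F" "a < F ! b" by (auto simp: cell_def)
  moreover have "F ! b \<le> hd F" using partition_nth_antimono[OF F(1), of 0 b] \<open>b < length F\<close> F(2)
    by (simp add: hd_conv_nth)
  moreover have "F ! b \<le> F ! (y - 1)" if "0 < y"
    using partition_nth_antimono[OF F(1), of "y - 1" b] ab(3) \<open>b < length F\<close> that by auto
  ultimately show "on_boundary F (x, y)"
    using L ab(2,3) by (auto simp: on_boundary_def cell_def)
qed

lemma bpt_on_boundary:
  assumes F: "is_partition F" "F \<noteq> []"
  shows "i \<le> boundary_len F \<Longrightarrow> on_boundary F (bpt F i) \<and> fst (bpt F i) + i = hd F + snd (bpt F i)"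
proof (induction i)
  case 0
  then show ?case
    using F partition_nth_pos[OF F(1), of 0] by (simp add: on_boundary_def hd_conv_nth)
next
  case (Suc i)
  obtain x y where xy: "bpt F i = (x, y)" by fastforce
  have B: "on_boundary F (x, y)" and idx: "x + i = hd F + y" using Suc xy by auto
  show ?case
  proof (cases "step_up F (x, y)")
    case True
    then have "y < length F" "F ! y = x" by (auto simp: step_up_def)
    moreover have "Suc y < length F \<Longrightarrow> F ! Suc y \<le> F ! y"
      using partition_nth_antimono[OF F(1), of y "Suc y"] by simp
    ultimately show ?thesis using B idx True xy by (auto simp: on_boundary_def bstep_def)
  next
    case False
    then have "y < length F \<Longrightarrow> F ! y < x" using B by (auto simp: on_boundary_def step_up_def)
    moreover have "0 < x"
    proof (cases "y < length F")
      case False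
      then have "y = length F" using B by (simp add: on_boundary_def)
      then show ?thesis using idx Suc.prems by (simp add: boundary_len_def)
    qed (use calculation in auto)
    ultimately show ?thesis using B idx False xy by (auto simp: on_boundary_def bstep_def)
  qed
qed

lemma on_boundary_eqI:
  assumes F: "is_partition F" and p: "on_boundary F p" and q: "on_boundary F q"
    and "fst p + snd q = fst q + snd p"
  shows "p = q"
proof -
  have "\<not> snd p < snd q" if p: "on_boundary F p" and q: "on_boundary F q"
    and "fst p + snd q = fst q + snd p" for p q
  proof
    assume "snd p < snd q"
    then have "fst p < fst q" "snd q - 1 < length F" "snd p \<le> snd q - 1"
      using that q by (auto simp: on_boundary_def)
    moreover have "F ! snd p \<le> fst p" "fst q \<le> F ! (snd q - 1)"
      using p q \<open>snd p < snd q\<close> by (auto simp: on_boundary_def)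
    ultimately show False using partition_nth_antimono[OF F, of "snd p" "snd q - 1"] by simp
  qed
  from this[OF p q] this[OF q p] have "snd p = snd q" using assms(4) by simp
  then show ?thesis using assms(4) by (simp add: prod_eq_iff)
qed

definition boundary_index :: "nat list \<Rightarrow> nat \<times> nat \<Rightarrow> nat" where
  "boundary_index F p = hd F + snd p - fst p"

lemma bpt_boundary_index:
  assumes F: "is_partition F" "F \<noteq> []" and B: "on_boundary F p"
  shows "boundary_index F p \<le> boundary_len F" and "bpt F (boundary_index F p) = p"
proof -
  show le: "boundary_index F p \<le> boundary_len F"
    using B by (auto simp: on_boundary_def boundary_index_def boundary_len_def)
  let ?q = "bpt F (boundary_index F p)"
  have q: "on_boundary F ?q" "fst ?q + boundary_index F p = hd F + snd ?q"
    using bpt_on_boundary[OF F le] by auto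
  moreover have "fst p \<le> hd F" using B by (simp add: on_boundary_def)
  ultimately have "fst ?q + snd p = fst p + snd ?q" by (simp add: boundary_index_def)
  then show "?q = p" using on_boundary_eqI[OF F(1) q(1) B] by simp
qed

lemma boundary_index_bpt:
  assumes "is_partition F" "F \<noteq> []" "i \<le> boundary_len F"
  shows "boundary_index F (bpt F i) = i"
proof -
  have "fst (bpt F i) + i = hd F + snd (bpt F i)" using bpt_on_boundary[OF assms] by simp
  then show ?thesis unfolding boundary_index_def by arith
qed

lemma bpt_lattice_point:
  "is_partition F \<Longrightarrow> F \<noteq> [] \<Longrightarrow> i \<le> boundary_len F \<Longrightarrow> lattice_point F (bpt F i) \<and> \<not> cell F (bpt F i)"
  using bpt_on_boundary[of F i] on_boundary_iff[of F "fst (bpt F i)" "snd (bpt F i)"] by simp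

lemma bpt_last: "is_partition F \<Longrightarrow> F \<noteq> [] \<Longrightarrow> bpt F (boundary_len F) = (0, length F)"
  using bpt_on_boundary[of F "boundary_len F"]
  by (cases "bpt F (boundary_len F)") (auto simp: boundary_len_def on_boundary_def)

lemma bpt_Suc_left:
  assumes F: "is_partition F" "F \<noteq> []" and "i < boundary_len F" and "\<not> step_up F (bpt F i)"
  shows "0 < fst (bpt F i)" and "bpt F (Suc i) = (fst (bpt F i) - 1, snd (bpt F i))"
proof -
  show "bpt F (Suc i) = (fst (bpt F i) - 1, snd (bpt F i))" using assms(4) by (simp add: bstep_def)
  then show "0 < fst (bpt F i)"
    using bpt_on_boundary[OF F, of i] bpt_on_boundary[OF F, of "Suc i"] \<open>i < boundary_len F\<close> by auto
qed

lemma length_type_seq: "length (type_seq F) = boundary_len F"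
  by (simp add: type_seq_def)

lemma type_seq_nth: "i < boundary_len F \<Longrightarrow> type_seq F ! i = step_up F (bpt F i)"
  by (simp add: type_seq_def)

section \<open>Patterns and south-east chains\<close>

lemma contains_pattern_imp_se_chain:
  assumes "contains_pattern d F m"
  shows "\<exists>x y. cell F (x, y) \<and> m (x, y) \<noteq> 0 \<and> se_chain {p \<in> {..<x} \<times> {..<y}. 0 < m p} d"
proof -
  obtain c where nonzero: "\<forall>i\<in>{1..Suc d}. cell F (c i) \<and> m (c i) \<noteq> 0"
    and se: "\<forall>i\<in>{1..<d}. fst (c i) < fst (c (Suc i)) \<and> snd (c (Suc i)) < snd (c i)"
    and above: "\<forall>i\<in>{1..d}. fst (c i) < fst (c (Suc d)) \<and> snd (c i) < snd (c (Suc d))"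
    using assms unfolding contains_pattern_def by blast
  obtain x y where xy: "c (Suc d) = (x, y)" by fastforce
  have "se_chain {p \<in> {..<x} \<times> {..<y}. 0 < m p} d"
    unfolding se_chain_def strictly_se_def
    by (rule exI[of _ "\<lambda>i. c (Suc i)"]) (use nonzero se above xy in \<open>auto simp: mem_Times_iff\<close>)
  moreover have "cell F (x, y)" "m (x, y) \<noteq> 0" using nonzero[rule_format, of "Suc d"] xy by auto
  ultimately show ?thesis by blast
qed

lemma se_chain_imp_contains_pattern:
  assumes F: "is_partition F" and xy: "cell F (x, y)" "m (x, y) \<noteq> 0"
    and chain: "se_chain {p \<in> {..<x} \<times> {..<y}. 0 < m p} d"
  shows "contains_pattern d F m"
proof -
  obtain c where c: "\<forall>i<d. c i \<in> {p \<in> {..<x} \<times> {..<y}. 0 < m p}"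
    and se: "\<forall>i. Suc i < d \<longrightarrow> strictly_se (c i) (c (Suc i))"
    using chain unfolding se_chain_def by blast
  define c' where "c' i = (if i = Suc d then (x, y) else c (i - 1))" for i
  have "cell F (c i)" if "i < d" for i
    using c that cell_downward_closed[OF F xy(1), of "fst (c i)" "snd (c i)"] by (auto simp: mem_Times_iff)
  then have "\<forall>i\<in>{1..Suc d}. cell F (c' i) \<and> m (c' i) \<noteq> 0"
    using c xy by (auto simp: c'_def)
  moreover have "fst (c' i) < fst (c' (Suc i)) \<and> snd (c' (Suc i)) < snd (c' i)" if "i \<in> {1..<d}" for i
  proof -
    have "Suc (i - 1) < d" "Suc (i - 1) = i" using that by auto
    then show ?thesis using se[rule_format, of "i - 1"] by (auto simp: c'_def strictly_se_def)
  qed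
  moreover have "\<forall>i\<in>{1..d}. fst (c' i) < fst (c' (Suc d)) \<and> snd (c' i) < snd (c' (Suc d))"
    using c by (auto simp: c'_def mem_Times_iff)
  ultimately show ?thesis unfolding contains_pattern_def by (intro exI[of _ c']) blast
qed

section \<open>Growth diagrams: boundary tableau and pattern avoidance\<close>

lemma growth_diagram_rule:
  "growth_diagram d F m P \<Longrightarrow> cell F (x, y) \<Longrightarrow>
    rsk_local_rule d (m (x, y)) (P (x, y)) (P (x, Suc y)) (P (Suc x, y)) (P (Suc x, Suc y))"
  by (simp add: growth_diagram_def)

lemma growth_diagram_axis:
  "growth_diagram d F m P \<Longrightarrow> lattice_point F p \<Longrightarrow> fst p = 0 \<or> snd p = 0 \<Longrightarrow> P p = []"
  unfolding growth_diagram_def by blast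

lemma growth_diagram_d_partition:
  assumes G: "growth_diagram d F m P" and "lattice_point F p"
  shows "d_partition d (P p)"
proof -
  obtain a b where "cell F (a, b)" "fst p \<in> {a, Suc a}" "snd p \<in> {b, Suc b}"
    using \<open>lattice_point F p\<close> unfolding lattice_point_def by auto
  then show ?thesis
    using growth_diagram_rule[OF G \<open>cell F (a, b)\<close>] by (cases p) (auto simp: rsk_local_rule_def)
qed

lemma growth_diagram_interlaces_right:
  assumes G: "growth_diagram d F m P" and F: "is_partition F" and "lattice_point F (Suc x, y)"
  shows "interlaces (P (x, y)) (P (Suc x, y))"
  using lattice_point_Suc_cell_right[OF F \<open>lattice_point F (Suc x, y)\<close>]
    growth_diagram_rule[OF G, of x y] growth_diagram_rule[OF G, of x "y - 1"]
  by (auto simp: rsk_local_rule_def)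

lemma growth_diagram_interlaces_up:
  assumes G: "growth_diagram d F m P" and F: "is_partition F" and "lattice_point F (x, Suc y)"
  shows "interlaces (P (x, y)) (P (x, Suc y))"
  using lattice_point_Suc_cell_up[OF F \<open>lattice_point F (x, Suc y)\<close>]
    growth_diagram_rule[OF G, of x y] growth_diagram_rule[OF G, of "x - 1" y]
  by (auto simp: rsk_local_rule_def)

lemma growth_diagram_rsk_rect:
  assumes F: "is_partition F" and G: "growth_diagram d F m P" and "cell F (X, Y)"
  shows "rsk_rect d m P X Y"
proof -
  have cells: "cell F (x, y)" if "x \<le> X" "y \<le> Y" for x y
    using cell_downward_closed[OF F \<open>cell F (X, Y)\<close>] that .
  show ?thesis
    unfolding rsk_rect_def
  proof (intro conjI allI impI)
    fix x y assume "x < X" "y < Y"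
    then show "rsk_local_eqs d (m (x, y)) (P (x, y)) (P (x, Suc y)) (P (Suc x, y)) (P (Suc x, Suc y))"
      using growth_diagram_rule[OF G cells[of x y]] rsk_local_rule_iff by simp
  next
    fix x assume "x \<le> X"
    then show "P (x, 0) = []"
      using growth_diagram_axis[OF G] lattice_point_cell_corners[OF cells[of x 0]] by simp
  next
    fix y assume "y \<le> Y"
    then show "P (0, y) = []"
      using growth_diagram_axis[OF G] lattice_point_cell_corners[OF cells[of 0 y]] by simp
  qed
qed

theorem growth_diagram_avoids_pattern:
  assumes d: "1 \<le> d" and F: "is_partition F" and G: "growth_diagram d F m P"
  shows "avoids_pattern d F m"
  unfolding avoids_pattern_def
proof
  assume "contains_pattern d F m"
  then obtain x y where xy: "cell F (x, y)" "m (x, y) \<noteq> 0"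
    and "se_chain {p \<in> {..<x} \<times> {..<y}. 0 < m p} d"
    using contains_pattern_imp_se_chain by blast
  then have "0 < part (P (x, y)) d"
    using rsk_rect_last_part_pos_iff_se_chain[OF d growth_diagram_rsk_rect[OF F G xy(1)]] by simp
  moreover have "part (P (x, y)) d = 0"
    using growth_diagram_rule[OF G xy(1)] xy(2) by (simp add: rsk_local_rule_def)
  ultimately show False by simp
qed

theorem growth_diagram_boundary_osc_tableau:
  assumes F: "is_partition F" "F \<noteq> []" and G: "growth_diagram d F m P"
  shows "d_osc_tableau d (type_seq F) (\<lambda>i. P (bpt F i))"
  unfolding d_osc_tableau_def length_type_seq
proof (intro conjI allI impI ballI)
  show "P (bpt F 0) = []"
    using growth_diagram_axis[OF G bpt_lattice_point[OF F, of 0, THEN conjunct1]] by simp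
  show "P (bpt F (boundary_len F)) = []"
    using growth_diagram_axis[OF G bpt_lattice_point[OF F order.refl, THEN conjunct1]] bpt_last[OF F]
    by simp
  show "d_partition d (P (bpt F i))" if "i \<le> boundary_len F" for i
    using growth_diagram_d_partition[OF G] bpt_lattice_point[OF F that] by simp
next
  fix i assume "i \<in> {1..boundary_len F}"
  then have j: "i - 1 < boundary_len F" "i = Suc (i - 1)" by auto
  obtain x y where xy: "bpt F (i - 1) = (x, y)" by fastforce
  have lattice: "lattice_point F (bpt F i)" "lattice_point F (x, y)"
    using bpt_lattice_point[OF F, of i] bpt_lattice_point[OF F, of "i - 1"] j xy by auto
  show "if type_seq F ! (i - 1) then interlaces (P (bpt F (i - 1))) (P (bpt F i))
    else interlaces (P (bpt F i)) (P (bpt F (i - 1)))"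
  proof (cases "step_up F (x, y)")
    case True
    then have "bpt F i = (x, Suc y)" using xy j(2) by (metis bpt.simps(2) bstep_def fst_conv snd_conv)
    then show ?thesis
      using True xy lattice growth_diagram_interlaces_up[OF G F(1)] type_seq_nth[OF j(1)] by simp
  next
    case False
    then have "0 < x" "bpt F i = (x - 1, y)" using bpt_Suc_left[OF F j(1)] xy j(2) by auto
    then show ?thesis
      using False xy lattice growth_diagram_interlaces_right[OF G F(1), of "x - 1" y]
        type_seq_nth[OF j(1)] by simp
  qed
qed

section \<open>Growing a diagram from a filling\<close>

fun rsk_grow :: "nat \<Rightarrow> (nat \<times> nat \<Rightarrow> nat) \<Rightarrow> nat \<times> nat \<Rightarrow> nat list" where
  "rsk_grow d m (Suc x, Suc y) =
     rsk_fwd d (m (x, y)) (rsk_grow d m (x, y)) (rsk_grow d m (x, Suc y)) (rsk_grow d m (Suc x, y))"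
| "rsk_grow d m _ = []"

lemma rsk_grow_axis: "x = 0 \<or> y = 0 \<Longrightarrow> rsk_grow d m (x, y) = []"
  by (cases x; cases y) auto

lemma rsk_grow_interlaces:
  "1 \<le> d \<Longrightarrow> d_partition d (rsk_grow d m (x, y)) \<and>
    (0 < y \<longrightarrow> interlaces (rsk_grow d m (x, y - 1)) (rsk_grow d m (x, y))) \<and>
    (0 < x \<longrightarrow> interlaces (rsk_grow d m (x - 1, y)) (rsk_grow d m (x, y)))"
proof (induction d m "(x, y)" arbitrary: x y rule: rsk_grow.induct)
  case (1 d m x y)
  then have "d_partition d (rsk_grow d m (x, y))"
    "d_partition d (rsk_grow d m (x, Suc y))" "d_partition d (rsk_grow d m (Suc x, y))"
    "interlaces (rsk_grow d m (x, y)) (rsk_grow d m (x, Suc y))"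
    "interlaces (rsk_grow d m (x, y)) (rsk_grow d m (Suc x, y))"
    by auto
  then show ?case
    using rsk_local_eqs_rsk_fwd[OF \<open>1 \<le> d\<close>, of _ _ _ "m (x, y)"] by (simp add: rsk_local_eqs_def)
qed (auto simp: rsk_grow_axis)

lemma rsk_local_eqs_rsk_grow:
  assumes "1 \<le> d"
  shows "rsk_local_eqs d (m (x, y)) (rsk_grow d m (x, y)) (rsk_grow d m (x, Suc y))
    (rsk_grow d m (Suc x, y)) (rsk_grow d m (Suc x, Suc y))"
  using rsk_local_eqs_rsk_fwd[OF assms] rsk_grow_interlaces[OF assms, of m x y]
    rsk_grow_interlaces[OF assms, of m x "Suc y"] rsk_grow_interlaces[OF assms, of m "Suc x" y]
  by simp

lemma rsk_rect_rsk_grow: "1 \<le> d \<Longrightarrow> rsk_rect d m (rsk_grow d m) X Y"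
  unfolding rsk_rect_def using rsk_local_eqs_rsk_grow rsk_grow_axis by blast

theorem growth_diagram_rsk_grow:
  assumes d: "1 \<le> d" and F: "is_partition F" and avoids: "avoids_pattern d F m"
  shows "growth_diagram d F m (rsk_grow d m)"
  unfolding growth_diagram_def
proof (intro conjI allI impI)
  fix p :: "nat \<times> nat" assume "lattice_point F p \<and> (fst p = 0 \<or> snd p = 0)"
  then show "rsk_grow d m p = []" using rsk_grow_axis by (cases p) auto
next
  fix x y assume cell: "cell F (x, y)"
  have "m (x, y) = 0 \<or> part (rsk_grow d m (x, y)) d = 0"
  proof (rule ccontr)
    assume "\<not> (m (x, y) = 0 \<or> part (rsk_grow d m (x, y)) d = 0)"
    then have "m (x, y) \<noteq> 0" "se_chain {p \<in> {..<x} \<times> {..<y}. 0 < m p} d"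
      using rsk_rect_last_part_pos_iff_se_chain[OF d rsk_rect_rsk_grow[OF d]] by auto
    then show False
      using se_chain_imp_contains_pattern[OF F cell] avoids by (simp add: avoids_pattern_def)
  qed
  then show "rsk_local_rule d (m (x, y)) (rsk_grow d m (x, y)) (rsk_grow d m (x, Suc y))
    (rsk_grow d m (Suc x, y)) (rsk_grow d m (Suc x, Suc y))"
    using rsk_local_eqs_rsk_grow[OF d] rsk_local_rule_iff by blast
qed

theorem growth_diagram_eq_rsk_grow:
  assumes d: "1 \<le> d" and F: "is_partition F" and G: "growth_diagram d F m P"
  shows "lattice_point F (x, y) \<Longrightarrow> P (x, y) = rsk_grow d m (x, y)"
proof (induction "x + y" arbitrary: x y rule: less_induct)
  case less
  show ?case
  proof (cases "x = 0 \<or> y = 0")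
    case True
    then show ?thesis using growth_diagram_axis[OF G less.prems] rsk_grow_axis by auto
  next
    case False
    then obtain x' y' where xy: "x = Suc x'" "y = Suc y'" by (metis not0_implies_Suc)
    then have cell: "cell F (x', y')" using lattice_point_Suc_Suc_cell[OF F] less.prems by simp
    then have "P (x', y') = rsk_grow d m (x', y')" "P (x', y) = rsk_grow d m (x', y)"
      "P (x, y') = rsk_grow d m (x, y')"
      using less.hyps lattice_point_cell_corners[OF cell] xy by auto
    moreover have "P (x, y) = rsk_fwd d (m (x', y')) (P (x', y')) (P (x', y)) (P (x, y'))"
      using rsk_local_eqs_imp_eq_rsk_fwd[OF d] growth_diagram_rule[OF G cell] rsk_local_rule_iff xy
      by simp
    ultimately show ?thesis using xy by simp
  qed
qed

section \<open>Shrinking a diagram from its boundary\<close>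

lemma d_osc_tableau_step:
  assumes T: "d_osc_tableau d (type_seq F) lam" and "j < boundary_len F"
  shows "if step_up F (bpt F j) then interlaces (lam j) (lam (Suc j)) else interlaces (lam (Suc j)) (lam j)"
proof -
  have "Suc j \<in> {1..length (type_seq F)}" using assms(2) by (simp add: length_type_seq)
  then have "if type_seq F ! (Suc j - 1) then interlaces (lam (Suc j - 1)) (lam (Suc j))
      else interlaces (lam (Suc j)) (lam (Suc j - 1))"
    using T unfolding d_osc_tableau_def by blast
  then show ?thesis using type_seq_nth[OF assms(2)] by (simp only: diff_Suc_1)
qed

lemma d_osc_tableau_right_edge:
  assumes F: "is_partition F" "F \<noteq> []" and T: "d_osc_tableau d (type_seq F) lam"
    and "cell F (x, y)" "\<not> cell F (Suc x, y)"
  shows "interlaces (lam (boundary_index F (Suc x, y))) (lam (boundary_index F (Suc x, Suc y)))"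
proof -
  let ?j = "boundary_index F (Suc x, y)"
  have "\<not> cell F (Suc x, Suc y)"
    using assms(5) cell_downward_closed[OF F(1), of "Suc x" "Suc y" "Suc x" y] by auto
  then have on: "on_boundary F (Suc x, y)" "on_boundary F (Suc x, Suc y)"
    using lattice_point_cell_corners[OF assms(4)] assms(5) on_boundary_iff[OF F] by simp_all
  have "x < hd F" using cell_bounds[OF F assms(4)] by simp
  then have "boundary_index F (Suc x, Suc y) = Suc ?j" by (simp add: boundary_index_def)
  then have "Suc ?j \<le> boundary_len F" "bpt F ?j = (Suc x, y)" "bpt F (Suc ?j) = (Suc x, Suc y)"
    using bpt_boundary_index[OF F on(1)] bpt_boundary_index[OF F on(2)] by auto
  then have "step_up F (bpt F ?j)" by (auto simp: bstep_def split: if_splits)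
  then show ?thesis
    using d_osc_tableau_step[OF T, of ?j] \<open>Suc ?j \<le> boundary_len F\<close>
      \<open>boundary_index F (Suc x, Suc y) = Suc ?j\<close> by simp
qed

lemma d_osc_tableau_top_edge:
  assumes F: "is_partition F" "F \<noteq> []" and T: "d_osc_tableau d (type_seq F) lam"
    and "cell F (x, y)" "\<not> cell F (x, Suc y)"
  shows "interlaces (lam (boundary_index F (x, Suc y))) (lam (boundary_index F (Suc x, Suc y)))"
proof -
  let ?j = "boundary_index F (Suc x, Suc y)"
  have "\<not> cell F (Suc x, Suc y)"
    using assms(5) cell_downward_closed[OF F(1), of "Suc x" "Suc y" x "Suc y"] by auto
  then have on: "on_boundary F (Suc x, Suc y)" "on_boundary F (x, Suc y)"
    using lattice_point_cell_corners[OF assms(4)] assms(5) on_boundary_iff[OF F] by simp_all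
  have "x < hd F" using cell_bounds[OF F assms(4)] by simp
  then have "boundary_index F (x, Suc y) = Suc ?j" by (simp add: boundary_index_def)
  then have "Suc ?j \<le> boundary_len F" "bpt F ?j = (Suc x, Suc y)" "bpt F (Suc ?j) = (x, Suc y)"
    using bpt_boundary_index[OF F on(1)] bpt_boundary_index[OF F on(2)] by auto
  then have "\<not> step_up F (bpt F ?j)" by (auto simp: bstep_def)
  then show ?thesis
    using d_osc_tableau_step[OF T, of ?j] \<open>Suc ?j \<le> boundary_len F\<close>
      \<open>boundary_index F (x, Suc y) = Suc ?j\<close> by simp
qed

lemma cell_size_bound: "cell F (x, y) \<Longrightarrow> x + y + 2 \<le> sum_list F + length F"
  using elem_le_sum_list[of y F] by (auto simp: cell_def)

text \<open>Off the cells, the value is looked up in the tableau by boundary index; it is meaningful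
  only on the outer boundary.\<close>

function rsk_shrink :: "nat \<Rightarrow> nat list \<Rightarrow> (nat \<Rightarrow> nat list) \<Rightarrow> nat \<times> nat \<Rightarrow> nat list" where
  "rsk_shrink d F lam (x, y) = (if cell F (x, y)
     then rsk_bwd d (rsk_shrink d F lam (x, Suc y)) (rsk_shrink d F lam (Suc x, y))
       (rsk_shrink d F lam (Suc x, Suc y))
     else lam (boundary_index F (x, y)))"
  by pat_completeness auto
termination
  by (relation "measure (\<lambda>(d, F, lam, x, y). sum_list F + length F - (x + y))")
    (auto dest: cell_size_bound)

declare rsk_shrink.simps [simp del]

fun rsk_shrink_entry :: "nat \<Rightarrow> nat list \<Rightarrow> (nat \<Rightarrow> nat list) \<Rightarrow> nat \<times> nat \<Rightarrow> nat" where
  "rsk_shrink_entry d F lam (x, y) = (if cell F (x, y)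
     then rsk_bwd_entry d (rsk_shrink d F lam (x, Suc y)) (rsk_shrink d F lam (Suc x, y))
       (rsk_shrink d F lam (Suc x, Suc y))
     else 0)"

lemma rsk_shrink_cell:
  "cell F (x, y) \<Longrightarrow> rsk_shrink d F lam (x, y) =
    rsk_bwd d (rsk_shrink d F lam (x, Suc y)) (rsk_shrink d F lam (Suc x, y)) (rsk_shrink d F lam (Suc x, Suc y))"
  by (simp add: rsk_shrink.simps)

lemma rsk_shrink_not_cell: "\<not> cell F (x, y) \<Longrightarrow> rsk_shrink d F lam (x, y) = lam (boundary_index F (x, y))"
  by (simp add: rsk_shrink.simps)

lemma rsk_shrink_bpt:
  assumes "is_partition F" "F \<noteq> []" "i \<le> boundary_len F"
  shows "rsk_shrink d F lam (bpt F i) = lam i"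
  using rsk_shrink_not_cell[of F "fst (bpt F i)" "snd (bpt F i)"] bpt_lattice_point[OF assms]
    boundary_index_bpt[OF assms] by simp

lemma rsk_shrink_d_partition_boundary:
  assumes F: "is_partition F" "F \<noteq> []" and T: "d_osc_tableau d (type_seq F) lam"
    and "lattice_point F (x, y)" "\<not> cell F (x, y)"
  shows "d_partition d (rsk_shrink d F lam (x, y))"
  using bpt_boundary_index(1)[OF F, of "(x, y)"] on_boundary_iff[OF F] assms(4,5) T
  by (simp add: rsk_shrink_not_cell d_osc_tableau_def length_type_seq)

lemma rsk_shrink_local_rule:
  assumes d: "1 \<le> d" and F: "is_partition F" "F \<noteq> []" and T: "d_osc_tableau d (type_seq F) lam"
  shows "cell F (x, y) \<Longrightarrow> rsk_local_rule d (rsk_shrink_entry d F lam (x, y)) (rsk_shrink d F lam (x, y))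
    (rsk_shrink d F lam (x, Suc y)) (rsk_shrink d F lam (Suc x, y)) (rsk_shrink d F lam (Suc x, Suc y))"
proof (induction "hd F + length F - (x + y)" arbitrary: x y rule: less_induct)
  case less
  let ?Q = "rsk_shrink d F lam"
  have IH: "rsk_local_rule d (rsk_shrink_entry d F lam (x', y')) (?Q (x', y')) (?Q (x', Suc y'))
      (?Q (Suc x', y')) (?Q (Suc x', Suc y'))" if "cell F (x', y')" "x + y < x' + y'" for x' y'
  proof -
    have "hd F + length F - (x' + y') < hd F + length F - (x + y)"
      using cell_bounds[OF F that(1)] that(2) by linarith
    then show ?thesis using less.hyps that(1) by blast
  qed
  have part: "d_partition d (?Q (x', y'))" if "lattice_point F (x', y')" "x + y < x' + y'" for x' y'
    using IH[OF _ that(2)] rsk_shrink_d_partition_boundary[OF F T that(1)]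
    by (cases "cell F (x', y')") (auto simp: rsk_local_rule_def)
  have not_cell: "\<not> cell F (Suc x, Suc y)" if "\<not> cell F (x, Suc y) \<or> \<not> cell F (Suc x, y)"
    using that cell_downward_closed[OF F(1), of "Suc x" "Suc y"] by auto
  have up: "interlaces (?Q (x, Suc y)) (?Q (Suc x, Suc y))"
  proof (cases "cell F (x, Suc y)")
    case True
    then show ?thesis using IH[of x "Suc y"] by (simp add: rsk_local_rule_def)
  next
    case False
    then show ?thesis
      using d_osc_tableau_top_edge[OF F T less.prems False] not_cell by (simp add: rsk_shrink_not_cell)
  qed
  have right: "interlaces (?Q (Suc x, y)) (?Q (Suc x, Suc y))"
  proof (cases "cell F (Suc x, y)")
    case True
    then show ?thesis using IH[of "Suc x" y] by (simp add: rsk_local_rule_def)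
  next
    case False
    then show ?thesis
      using d_osc_tableau_right_edge[OF F T less.prems False] not_cell by (simp add: rsk_shrink_not_cell)
  qed
  have "d_partition d (?Q (x, Suc y))" "d_partition d (?Q (Suc x, y))" "d_partition d (?Q (Suc x, Suc y))"
    using part lattice_point_cell_corners[OF less.prems] by auto
  from rsk_local_rule_rsk_bwd[OF d this up right] show ?case
    using rsk_shrink_cell[OF less.prems] less.prems by simp
qed

lemma rsk_shrink_x_axis:
  assumes d: "1 \<le> d" and F: "is_partition F" "F \<noteq> []" and T: "d_osc_tableau d (type_seq F) lam"
  shows "lattice_point F (x, 0) \<Longrightarrow> rsk_shrink d F lam (x, 0) = []"
proof (induction "hd F - x" arbitrary: x rule: less_induct)
  case less
  show ?case
  proof (cases "cell F (x, 0)")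
    case True
    moreover have "hd F - Suc x < hd F - x" using cell_bounds[OF F True] by linarith
    ultimately have "rsk_shrink d F lam (Suc x, 0) = []"
      using less.hyps[of "Suc x"] lattice_point_cell_corners[OF True] by simp
    then show ?thesis
      using rsk_shrink_local_rule[OF d F T True] interlaces_Nil_right by (auto simp: rsk_local_rule_def)
  next
    case False
    then have "on_boundary F (x, 0)" using on_boundary_iff[OF F] less.prems by simp
    then have "boundary_index F (x, 0) = 0"
      using F(2) by (auto simp: on_boundary_def boundary_index_def hd_conv_nth)
    then show ?thesis using False T by (simp add: rsk_shrink_not_cell d_osc_tableau_def)
  qed
qed

lemma rsk_shrink_y_axis:
  assumes d: "1 \<le> d" and F: "is_partition F" "F \<noteq> []" and T: "d_osc_tableau d (type_seq F) lam"
  shows "lattice_point F (0, y) \<Longrightarrow> rsk_shrink d F lam (0, y) = []"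
proof (induction "length F - y" arbitrary: y rule: less_induct)
  case less
  show ?case
  proof (cases "cell F (0, y)")
    case True
    moreover have "length F - Suc y < length F - y" using cell_bounds[OF F True] by linarith
    ultimately have "rsk_shrink d F lam (0, Suc y) = []"
      using less.hyps[of "Suc y"] lattice_point_cell_corners[OF True] by simp
    then show ?thesis
      using rsk_shrink_local_rule[OF d F T True] interlaces_Nil_right by (auto simp: rsk_local_rule_def)
  next
    case False
    then have "on_boundary F (0, y)" using on_boundary_iff[OF F] less.prems by simp
    then have "y = length F" using partition_nth_pos[OF F(1), of y] by (force simp: on_boundary_def)
    then show ?thesis
      using False T by (simp add: rsk_shrink_not_cell d_osc_tableau_def length_type_seq
          boundary_index_def boundary_len_def)
  qed
qed

theorem growth_diagram_rsk_shrink: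
  assumes d: "1 \<le> d" and F: "is_partition F" "F \<noteq> []" and T: "d_osc_tableau d (type_seq F) lam"
  shows "growth_diagram d F (rsk_shrink_entry d F lam) (rsk_shrink d F lam)"
  unfolding growth_diagram_def
proof (intro conjI allI impI)
  fix p :: "nat \<times> nat" assume "lattice_point F p \<and> (fst p = 0 \<or> snd p = 0)"
  then show "rsk_shrink d F lam p = []"
    using rsk_shrink_x_axis[OF d F T] rsk_shrink_y_axis[OF d F T] by (cases p) auto
qed (rule rsk_shrink_local_rule[OF d F T])

theorem growth_diagram_eq_rsk_shrink:
  assumes d: "1 \<le> d" and F: "is_partition F" "F \<noteq> []" and G: "growth_diagram d F m P"
    and boundary: "\<forall>i\<le>boundary_len F. P (bpt F i) = lam i"
  shows "lattice_point F (x, y) \<Longrightarrow>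
    P (x, y) = rsk_shrink d F lam (x, y) \<and> (cell F (x, y) \<longrightarrow> m (x, y) = rsk_shrink_entry d F lam (x, y))"
proof (induction "hd F + length F - (x + y)" arbitrary: x y rule: less_induct)
  case less
  show ?case
  proof (cases "cell F (x, y)")
    case False
    then have "on_boundary F (x, y)" using on_boundary_iff[OF F] less.prems by simp
    then show ?thesis
      using False boundary bpt_boundary_index[OF F] by (metis rsk_shrink_not_cell)
  next
    case True
    have "x < hd F" "y < length F" using cell_bounds[OF F True] by auto
    then have "P p = rsk_shrink d F lam p"
      if "p \<in> {(x, Suc y), (Suc x, y), (Suc x, Suc y)}" for p
      using that less.hyps lattice_point_cell_corners[OF True] by auto
    then show ?thesis
      using rsk_local_rule_imp_eq_rsk_bwd[OF d growth_diagram_rule[OF G True]] True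
      by (simp add: rsk_shrink_cell)
  qed
qed

section \<open>The bijection\<close>

definition rsk_boundary :: "nat \<Rightarrow> nat list \<Rightarrow> (nat \<times> nat \<Rightarrow> nat) \<Rightarrow> nat list list" where
  "rsk_boundary d F m = map (\<lambda>i. rsk_grow d m (bpt F i)) [0..<Suc (boundary_len F)]"

lemma length_rsk_boundary: "length (rsk_boundary d F m) = Suc (boundary_len F)"
  by (simp add: rsk_boundary_def del: upt_Suc)

lemma nth_rsk_boundary: "i \<le> boundary_len F \<Longrightarrow> rsk_boundary d F m ! i = rsk_grow d m (bpt F i)"
  by (simp add: rsk_boundary_def del: upt_Suc)

lemma d_osc_tableau_cong:
  "d_osc_tableau d w lam \<Longrightarrow> (\<And>i. i \<le> length w \<Longrightarrow> lam' i = lam i) \<Longrightarrow> d_osc_tableau d w lam'"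
  unfolding d_osc_tableau_def by (auto simp del: One_nat_def)

lemma rsk_boundary_d_osc_tableau:
  assumes d: "1 \<le> d" and F: "is_partition F" "F \<noteq> []" and "avoids_pattern d F m"
  shows "d_osc_tableau d (type_seq F) (\<lambda>i. rsk_boundary d F m ! i)"
  using growth_diagram_boundary_osc_tableau[OF F growth_diagram_rsk_grow[OF d F(1) assms(4)]]
  by (rule d_osc_tableau_cong) (simp add: nth_rsk_boundary length_type_seq)

lemma rsk_boundary_eq_imp_eq_on_cells:
  assumes d: "1 \<le> d" and F: "is_partition F" "F \<noteq> []"
    and "avoids_pattern d F m" "avoids_pattern d F m'" "rsk_boundary d F m = rsk_boundary d F m'"
    and "cell F (x, y)"
  shows "m (x, y) = m' (x, y)"
proof -
  let ?lam = "\<lambda>i. rsk_boundary d F m ! i"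
  have "n (x, y) = rsk_shrink_entry d F ?lam (x, y)"
    if "avoids_pattern d F n" "rsk_boundary d F n = rsk_boundary d F m" for n
  proof -
    have "\<forall>i\<le>boundary_len F. rsk_grow d n (bpt F i) = ?lam i"
      using that(2) nth_rsk_boundary by metis
    then show ?thesis
      using growth_diagram_eq_rsk_shrink[OF d F growth_diagram_rsk_grow[OF d F(1) that(1)]]
        \<open>cell F (x, y)\<close> lattice_point_cell_corners[OF \<open>cell F (x, y)\<close>] by blast
  qed
  from this[OF assms(4) refl] this[OF assms(5) assms(6)[symmetric]] show ?thesis by simp
qed

lemma rsk_boundary_rsk_shrink_entry:
  assumes d: "1 \<le> d" and F: "is_partition F" "F \<noteq> []" and T: "d_osc_tableau d (type_seq F) lam"
  shows "rsk_boundary d F (rsk_shrink_entry d F lam) = map lam [0..<Suc (boundary_len F)]"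
  unfolding rsk_boundary_def
proof (rule map_cong[OF refl])
  fix i assume "i \<in> set [0..<Suc (boundary_len F)]"
  then have i: "i \<le> boundary_len F" by auto
  have G: "growth_diagram d F (rsk_shrink_entry d F lam) (rsk_shrink d F lam)"
    by (rule growth_diagram_rsk_shrink[OF d F T])
  show "rsk_grow d (rsk_shrink_entry d F lam) (bpt F i) = lam i"
    using growth_diagram_eq_rsk_grow[OF d F(1) G, of "fst (bpt F i)" "snd (bpt F i)"]
      bpt_lattice_point[OF F i] rsk_shrink_bpt[OF F i] by simp
qed

theorem bij_betw_rsk_boundary:
  assumes d: "1 \<le> d" and F: "is_partition F" "F \<noteq> []"
  shows "bij_betw (rsk_boundary d F) {m. avoids_pattern d F m \<and> (\<forall>c. \<not> cell F c \<longrightarrow> m c = 0)}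
    {ls. length ls = Suc (boundary_len F) \<and> d_osc_tableau d (type_seq F) (\<lambda>i. ls ! i)}"
    (is "bij_betw ?\<Phi> ?A ?B")
  unfolding bij_betw_def
proof (intro conjI inj_onI equalityI subsetI)
  fix m m' assume m: "m \<in> ?A" and m': "m' \<in> ?A" and eq: "?\<Phi> m = ?\<Phi> m'"
  show "m = m'"
  proof
    fix c :: "nat \<times> nat"
    obtain x y where c: "c = (x, y)" by fastforce
    show "m c = m' c"
      using rsk_boundary_eq_imp_eq_on_cells[OF d F, of m m' x y] m m' eq c by (cases "cell F c") simp_all
  qed
next
  fix ls assume "ls \<in> ?\<Phi> ` ?A"
  then obtain m where "m \<in> ?A" "ls = ?\<Phi> m" by blast
  then show "ls \<in> ?B" using rsk_boundary_d_osc_tableau[OF d F] length_rsk_boundary by simp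
next
  fix ls assume ls: "ls \<in> ?B"
  let ?m = "rsk_shrink_entry d F (\<lambda>i. ls ! i)"
  have "avoids_pattern d F ?m"
    using growth_diagram_avoids_pattern[OF d F(1) growth_diagram_rsk_shrink[OF d F]] ls by simp
  moreover have "\<not> cell F c \<Longrightarrow> ?m c = 0" for c by (cases c) simp
  ultimately have "?m \<in> ?A" by simp
  moreover have "ls = map (\<lambda>i. ls ! i) [0..<Suc (boundary_len F)]"
    using ls map_nth[of ls] by (simp del: upt_Suc)
  then have "ls = ?\<Phi> ?m"
    using rsk_boundary_rsk_shrink_entry[OF d F] ls by (simp del: upt_Suc)
  ultimately show "ls \<in> ?\<Phi> ` ?A" unfolding image_iff by blast
qed

lemma ex_unique_growth_diagram_of_filling:
  assumes d: "1 \<le> d" and F: "is_partition F" and "avoids_pattern d F m"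
  shows "\<exists>P. growth_diagram d F m P \<and>
    (\<forall>P'. growth_diagram d F m P' \<longrightarrow> (\<forall>p. lattice_point F p \<longrightarrow> P' p = P p))"
proof (intro exI[of _ "rsk_grow d m"] conjI allI impI)
  show "growth_diagram d F m (rsk_grow d m)" by (rule growth_diagram_rsk_grow[OF assms])
  fix P' p assume "growth_diagram d F m P'" "lattice_point F p"
  then show "P' p = rsk_grow d m p" using growth_diagram_eq_rsk_grow[OF d F] by (cases p) blast
qed

lemma ex_unique_growth_diagram_of_tableau:
  assumes d: "1 \<le> d" and F: "is_partition F" "F \<noteq> []" and T: "d_osc_tableau d (type_seq F) lam"
  shows "\<exists>m P. growth_diagram d F m P \<and> (\<forall>i\<le>boundary_len F. P (bpt F i) = lam i) \<and>
    (\<forall>m' P'. growth_diagram d F m' P' \<and> (\<forall>i\<le>boundary_len F. P' (bpt F i) = lam i) \<longrightarrow>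
      (\<forall>c. cell F c \<longrightarrow> m' c = m c) \<and> (\<forall>p. lattice_point F p \<longrightarrow> P' p = P p))"
proof (intro exI[of _ "rsk_shrink_entry d F lam"] exI[of _ "rsk_shrink d F lam"] conjI allI impI)
  show "growth_diagram d F (rsk_shrink_entry d F lam) (rsk_shrink d F lam)"
    by (rule growth_diagram_rsk_shrink[OF d F T])
  show "rsk_shrink d F lam (bpt F i) = lam i" if "i \<le> boundary_len F" for i
    by (rule rsk_shrink_bpt[OF F that])
  fix m' P' assume G: "growth_diagram d F m' P' \<and> (\<forall>i\<le>boundary_len F. P' (bpt F i) = lam i)"
  show "m' c = rsk_shrink_entry d F lam c" if "cell F c" for c
    using growth_diagram_eq_rsk_shrink[OF d F, of m' P' lam "fst c" "snd c"] G that
      lattice_point_cell_corners[of F "fst c" "snd c"] by simp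
  show "P' p = rsk_shrink d F lam p" if "lattice_point F p" for p
    using growth_diagram_eq_rsk_shrink[OF d F, of m' P' lam "fst p" "snd p"] G that by simp
qed

lemma rsk_boundary_reads_growth_diagram:
  assumes "1 \<le> d" "is_partition F" "avoids_pattern d F m"
  shows "\<exists>P. growth_diagram d F m P \<and> rsk_boundary d F m = map (\<lambda>i. P (bpt F i)) [0..<Suc (boundary_len F)]"
  using growth_diagram_rsk_grow[OF assms] unfolding rsk_boundary_def by blast

theorem theorem3p3:
  fixes d :: nat and F :: "nat list" and w :: "bool list" and k :: nat
  assumes d_pos: "d \<ge> 1"
    and F_part: "is_partition F" and F_ne: "F \<noteq> []"
    and w_def: "w = type_seq F" and k_def: "k = length w"
  shows
    \<comment> \<open>(a)\<close>
    "(\<forall>m P. growth_diagram d F m P \<longrightarrow>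
        d_osc_tableau d w (\<lambda>i. P (bpt F i)) \<and> avoids_pattern d F m)
     \<and>
     \<comment> \<open>(b)\<close>
     (\<forall>m. avoids_pattern d F m \<longrightarrow>
        (\<exists>P. growth_diagram d F m P \<and>
           (\<forall>P'. growth_diagram d F m P' \<longrightarrow> (\<forall>p. lattice_point F p \<longrightarrow> P' p = P p))))
     \<and>
     \<comment> \<open>(c)\<close>
     (\<forall>lam. d_osc_tableau d w lam \<longrightarrow>
        (\<exists>m P. growth_diagram d F m P \<and> (\<forall>i\<le>k. P (bpt F i) = lam i) \<and>
           (\<forall>m' P'. growth_diagram d F m' P' \<and> (\<forall>i\<le>k. P' (bpt F i) = lam i) \<longrightarrow>
              (\<forall>c. cell F c \<longrightarrow> m' c = m c) \<and> (\<forall>p. lattice_point F p \<longrightarrow> P' p = P p))))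
     \<and>
     \<comment> \<open>consequence: bijection given by reading off the boundary of the growth diagram\<close>
     (\<exists>\<Phi>. bij_betw \<Phi> {m. avoids_pattern d F m \<and> (\<forall>c. \<not> cell F c \<longrightarrow> m c = 0)}
                     {ls. length ls = Suc k \<and> d_osc_tableau d w (\<lambda>i. ls ! i)} \<and>
          (\<forall>m. avoids_pattern d F m \<and> (\<forall>c. \<not> cell F c \<longrightarrow> m c = 0) \<longrightarrow>
             (\<exists>P. growth_diagram d F m P \<and> \<Phi> m = map (\<lambda>i. P (bpt F i)) [0..<Suc k])))"
proof -
  note F = F_part F_ne
  have k: "k = boundary_len F" using k_def w_def length_type_seq by simp
  have a: "growth_diagram d F m P \<Longrightarrow>
      d_osc_tableau d (type_seq F) (\<lambda>i. P (bpt F i)) \<and> avoids_pattern d F m" for m P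
    using growth_diagram_boundary_osc_tableau[OF F] growth_diagram_avoids_pattern[OF d_pos F_part] by blast
  show ?thesis
    unfolding k w_def
    using a ex_unique_growth_diagram_of_filling[OF d_pos F_part]
      ex_unique_growth_diagram_of_tableau[OF d_pos F] bij_betw_rsk_boundary[OF d_pos F]
      rsk_boundary_reads_growth_diagram[OF d_pos F_part]
    by blast
qed

end
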